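(* Let $w$ be a decreasing weight on $(0,\infty)$ with $W(t)=\int_0^t w$. The following are equivalent: (i) There exist $1<q<\infty$ and a weight $v$ such that $\Lambda^1(w)=\Gamma^q(v)$. (ii) For every $1<q<\infty$ there exists a weight $w_q$ satisfying $\big(\int_0^r w\big)^q\approx\int_0^r w_q(x)\,dx+r^q\int_r^\infty w_q(x)x^{-q}\,dx$ for all $r>0$ (constants independent of $r$) such that $\Lambda^1(w)=\Gamma^q(w_q)$. (iii) $\Lambda^1(w)=\Gamma^{1,\infty}(w)$, $\lim_{t\to\infty}w(t)=0$, and $w\in L^1(0,\infty)$.
   Context: A weight is a nonnegative locally integrable measurable function on $(0,\infty)$; "decreasing" means nonincreasing. For a measurable function $f$ on $\mathbb{R}^n$, $f^*$ is its decreasing rearrangement and $f^{**}(t)=\frac1t\int_0^t f^*(s)\,ds$. $\|f\|_{\Lambda^1(w)}=\int_0^\infty f^*w$, $\|f\|_{\Gamma^q(v)}=\big(\int_0^\infty (f^{**})^q v\big)^{1/q}$, $\|f\|_{\Gamma^{1,\infty}(w)}=\sup_{t>0}f^{**}(t)W(t)$, each space consisting of the $f$ with finite quantity. $X=Y$ means the spaces coincide with equivalent (quasi-)norms. *)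

theory Defs
  imports "HOL-Analysis.Analysis"
begin

definition is_weight :: "(real \<Rightarrow> real) \<Rightarrow> bool" where
  "is_weight v \<longleftrightarrow> set_borel_measurable lborel {0<..} v \<and> (\<forall>t>0. 0 \<le> v t)
     \<and> (\<forall>a b. 0 < a \<longrightarrow> set_integrable lborel {a..b} v)"

definition decreasing_weight :: "(real \<Rightarrow> real) \<Rightarrow> bool" where
  "decreasing_weight w \<longleftrightarrow> is_weight w \<and> (\<forall>s t. 0 < s \<longrightarrow> s \<le> t \<longrightarrow> w t \<le> w s)"

definition epowr :: "ennreal \<Rightarrow> real \<Rightarrow> ennreal" where
  "epowr x q = (if x = \<infinity> then \<infinity> else ennreal (enn2real x powr q))"

definition distrib_fun :: "('a::euclidean_space \<Rightarrow> real) \<Rightarrow> real \<Rightarrow> ennreal" where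
  "distrib_fun f s = emeasure lebesgue {x. s < \<bar>f x\<bar>}"

definition rearr :: "('a::euclidean_space \<Rightarrow> real) \<Rightarrow> real \<Rightarrow> ennreal" where
  "rearr f t = Inf (ennreal ` {s. 0 \<le> s \<and> distrib_fun f s \<le> ennreal t})"

definition max_rearr :: "('a::euclidean_space \<Rightarrow> real) \<Rightarrow> real \<Rightarrow> ennreal" where
  "max_rearr f t = ennreal (1 / t) * (\<integral>\<^sup>+ s\<in>{0<..<t}. rearr f s \<partial>lborel)"

definition Wprim :: "(real \<Rightarrow> real) \<Rightarrow> real \<Rightarrow> ennreal" where
  "Wprim w t = (\<integral>\<^sup>+ x\<in>{0<..<t}. ennreal (w x) \<partial>lborel)"

definition Lambda1_norm :: "(real \<Rightarrow> real) \<Rightarrow> ('a::euclidean_space \<Rightarrow> real) \<Rightarrow> ennreal" where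
  "Lambda1_norm w f = (\<integral>\<^sup>+ t\<in>{0<..}. rearr f t * ennreal (w t) \<partial>lborel)"

definition Gamma_norm :: "real \<Rightarrow> (real \<Rightarrow> real) \<Rightarrow> ('a::euclidean_space \<Rightarrow> real) \<Rightarrow> ennreal" where
  "Gamma_norm q v f = epowr (\<integral>\<^sup>+ t\<in>{0<..}. epowr (max_rearr f t) q * ennreal (v t) \<partial>lborel) (1 / q)"

definition Gamma1inf_norm :: "(real \<Rightarrow> real) \<Rightarrow> ('a::euclidean_space \<Rightarrow> real) \<Rightarrow> ennreal" where
  "Gamma1inf_norm w f = (SUP t\<in>{0<..}. max_rearr f t * Wprim w t)"

text \<open>X = Y: the spaces {f measurable : N f < \<infinity>} coincide with equivalent (quasi-)norms.
  Two-sided comparability on all measurable f (values in [0,\<infinity>]) encodes both.\<close>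
definition space_eq :: "(('a::euclidean_space \<Rightarrow> real) \<Rightarrow> ennreal) \<Rightarrow> (('a \<Rightarrow> real) \<Rightarrow> ennreal) \<Rightarrow> bool" where
  "space_eq N1 N2 \<longleftrightarrow> (\<exists>C::real. C > 0 \<and> (\<forall>f \<in> borel_measurable lebesgue.
      N1 f \<le> ennreal C * N2 f \<and> N2 f \<le> ennreal C * N1 f))"

definition equiv_on_pos :: "(real \<Rightarrow> ennreal) \<Rightarrow> (real \<Rightarrow> ennreal) \<Rightarrow> bool" where
  "equiv_on_pos A B \<longleftrightarrow> (\<exists>C::real. C > 0 \<and> (\<forall>r>0. A r \<le> ennreal C * B r \<and> B r \<le> ennreal C * A r))"

end

theory Submission
  imports Defs
begin

text \<open>All three conditions are equivalent to \<open>w\<close> being bounded and integrable on \<open>(0,\<infinity>)\<close>.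

  If \<open>w\<close> is bounded, integrable and \<open>w a > 0\<close>, then the \<open>\<Lambda>\<^sup>1(w)\<close>-norm, the \<open>\<Gamma>\<^sup>1\<^sup>,\<^sup>\<infinity>(w)\<close>-norm
  and the \<open>\<Gamma>\<^sup>q(w\<^sub>q)\<close>-norm for \<open>w\<^sub>q\<close> the indicator of \<open>(a, 2a)\<close> are all comparable to
  \<open>f\<^sup>*\<^sup>*(a)\<close>, because \<open>f\<^sup>*\<^sup>*\<close> decreases while \<open>t f\<^sup>*\<^sup>*(t)\<close> increases.

  Conversely, the test functions are sums of indicators of balls \<open>B\<^sub>k\<close> centred at 0, of volume
  \<open>s\<^sub>k\<close> and height \<open>1 / W(s\<^sub>k)\<close>; such a function with \<open>K\<close> balls has \<open>\<Lambda>\<^sup>1(w)\<close>-norm \<open>K\<close>. If \<open>w\<close>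
  is unbounded, or if \<open>W\<close> is unbounded while \<open>inf w = 0\<close>, there is a lacunary sequence \<open>s\<^sub>k\<close>
  along which \<open>W(s\<^sub>k)\<close> and \<open>s\<^sub>k / W(s\<^sub>k)\<close> both grow, or both decay, geometrically. Then
  \<open>f\<^sup>*\<^sup>*(t)\<close> is at most four times a single one of its terms, so the \<open>\<Gamma>\<^sup>1\<^sup>,\<^sup>\<infinity>(w)\<close>-norm stays
  bounded and the \<open>\<Gamma>\<^sup>q(v)\<close>-norm is \<open>O(K\<^sup>1\<^sup>/\<^sup>q)\<close>, which is incompatible with an
  equivalence of norms since \<open>q > 1\<close>. Finally, if \<open>w \<ge> L > 0\<close>, the indicator of a ball of
  volume \<open>s\<close> has \<open>\<Lambda>\<^sup>1(w)\<close>-norm \<open>W(s) \<ge> L s\<close>, whereas its \<open>\<Gamma>\<^sup>q(v)\<close>-norm is finite for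
  \<open>s = 1\<close> and therefore \<open>o(s)\<close>.\<close>

section \<open>Volumes of balls and radial functions\<close>

text \<open>\<open>{x. ball_vol x < s}\<close> is the ball centred at 0 of volume \<open>s\<close>.\<close>
definition ball_vol :: "'a::euclidean_space \<Rightarrow> real" where
  "ball_vol x = unit_ball_vol (DIM('a)) * norm x ^ DIM('a)"

lemma continuous_ball_vol: "continuous_on UNIV ball_vol"
  unfolding ball_vol_def[abs_def] by (intro continuous_intros)

lemma sets_lebesgue_ball_vol_less: "{x::'a::euclidean_space. ball_vol x < a} \<in> sets lebesgue"
proof -
  have "open {x::'a. ball_vol x < a}"
    unfolding ball_vol_def by (intro open_Collect_less continuous_intros)
  then show ?thesis
    by simp
qed

lemma emeasure_ball_vol_less:
  assumes "0 < a"
  shows "emeasure lebesgue {x::'a::euclidean_space. ball_vol x < a} = ennreal a"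
proof -
  define n where "n = DIM('a)"
  define k where "k = unit_ball_vol n"
  have "0 < k" by (simp add: k_def n_def)
  define r where "r = root n (a / k)"
  have "0 \<le> r" "r ^ n = a / k"
    using assms \<open>0 < k\<close> by (simp_all add: r_def n_def real_root_pow_pos2)
  have "ball_vol x < a \<longleftrightarrow> norm x < r" for x :: 'a
  proof -
    have "ball_vol x < a \<longleftrightarrow> norm x ^ n < r ^ n"
      unfolding \<open>r ^ n = a / k\<close> using \<open>0 < k\<close>
      by (simp add: ball_vol_def k_def n_def pos_less_divide_eq mult.commute)
    also have "\<dots> \<longleftrightarrow> norm x < r"
      using \<open>0 \<le> r\<close> power_less_imp_less_base[of "norm x" n r] power_strict_mono[of "norm x" r n]
      by (auto simp: n_def)
    finally show ?thesis .
  qed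
  then have "{x::'a. ball_vol x < a} = ball 0 r"
    by (simp add: ball_def dist_norm)
  then have "emeasure lebesgue {x::'a. ball_vol x < a} = emeasure lborel (ball (0::'a) r)"
    by simp
  also have "\<dots> = ennreal (k * r ^ n)"
    unfolding k_def n_def by (rule emeasure_ball[OF \<open>0 \<le> r\<close>])
  also have "k * r ^ n = a"
    using \<open>r ^ n = a / k\<close> \<open>0 < k\<close> by simp
  finally show ?thesis .
qed

lemma borel_measurable_antimono:
  fixes g :: "real \<Rightarrow> 'b::{linorder_topology, second_countable_topology}"
  assumes "antimono g"
  shows "g \<in> borel_measurable borel"
proof (rule borel_measurableI_greater)
  fix y
  have "is_interval {x. y < g x}"
    unfolding is_interval_1 using assms by (auto simp: antimono_def intro: less_le_trans)
  then show "{x \<in> space borel. y < g x} \<in> sets borel"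
    by (simp add: real_interval_borel_measurable)
qed

lemma borel_measurable_radial:
  fixes \<psi> :: "real \<Rightarrow> real"
  assumes "antimono \<psi>"
  shows "(\<lambda>x::'a::euclidean_space. \<psi> (ball_vol x)) \<in> borel_measurable lebesgue"
proof -
  have "ball_vol \<in> borel_measurable (borel :: 'a measure)"
    using continuous_ball_vol by (rule borel_measurable_continuous_onI)
  then have "(\<lambda>x::'a. \<psi> (ball_vol x)) \<in> borel_measurable lborel"
    using borel_measurable_antimono[OF assms] by simp
  then show ?thesis
    by (rule measurable_completion)
qed

lemma distrib_fun_radial_le:
  fixes \<psi> :: "real \<Rightarrow> real"
  assumes "antimono \<psi>" "\<And>u. 0 \<le> \<psi> u" "0 < t"
  shows "distrib_fun (\<lambda>x::'a::euclidean_space. \<psi> (ball_vol x)) (\<psi> t) \<le> ennreal t"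
proof -
  have "{x::'a. \<psi> t < \<bar>\<psi> (ball_vol x)\<bar>} \<subseteq> {x. ball_vol x < t}"
  proof
    fix x :: 'a
    assume "x \<in> {x. \<psi> t < \<bar>\<psi> (ball_vol x)\<bar>}"
    then have "\<psi> t < \<psi> (ball_vol x)"
      using assms(2) by simp
    then show "x \<in> {x. ball_vol x < t}"
      using antimonoD[OF assms(1), of t "ball_vol x"] by force
  qed
  then have "distrib_fun (\<lambda>x::'a. \<psi> (ball_vol x)) (\<psi> t) \<le> emeasure lebesgue {x::'a. ball_vol x < t}"
    unfolding distrib_fun_def by (intro emeasure_mono sets_lebesgue_ball_vol_less)
  then show ?thesis
    using emeasure_ball_vol_less[OF assms(3), where 'a='a] by simp
qed

lemma distrib_fun_radial_ge:
  fixes \<psi> :: "real \<Rightarrow> real"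
  assumes "antimono \<psi>" "\<And>u. 0 \<le> \<psi> u" "0 < u" "s < \<psi> u"
  shows "ennreal u \<le> distrib_fun (\<lambda>x::'a::euclidean_space. \<psi> (ball_vol x)) s"
proof -
  have "{x::'a. s < \<bar>\<psi> (ball_vol x)\<bar>} = (\<lambda>x. \<bar>\<psi> (ball_vol x)\<bar>) -` {s<..} \<inter> space lebesgue"
    by auto
  then have level_set: "{x::'a. s < \<bar>\<psi> (ball_vol x)\<bar>} \<in> sets lebesgue"
    using borel_measurable_radial[OF assms(1)]
    by (metis borel_measurable_abs measurable_sets sets_lborel greaterThan_borel)
  have "{x::'a. ball_vol x < u} \<subseteq> {x. s < \<bar>\<psi> (ball_vol x)\<bar>}"
  proof
    fix x :: 'a
    assume "x \<in> {x. ball_vol x < u}"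
    then have "\<psi> u \<le> \<psi> (ball_vol x)"
      by (simp add: antimonoD[OF assms(1)])
    then show "x \<in> {x. s < \<bar>\<psi> (ball_vol x)\<bar>}"
      using assms(2,4) by simp
  qed
  then have "emeasure lebesgue {x::'a. ball_vol x < u} \<le> distrib_fun (\<lambda>x::'a. \<psi> (ball_vol x)) s"
    unfolding distrib_fun_def using level_set by (rule emeasure_mono)
  then show ?thesis
    using emeasure_ball_vol_less[OF assms(3), where 'a='a] by simp
qed

text \<open>Rearrangements are right-continuous, so \<open>\<psi>\<close> has to be as well; local constancy to the right
  is the form of right-continuity that step profiles have.\<close>
lemma rearr_radial:
  fixes \<psi> :: "real \<Rightarrow> real"
  assumes anti: "antimono \<psi>" and nonneg: "\<And>u. 0 \<le> \<psi> u"
    and right_const: "\<And>u. \<exists>u'>u. \<psi> u' = \<psi> u"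
    and "0 < t"
  shows "rearr (\<lambda>x::'a::euclidean_space. \<psi> (ball_vol x)) t = ennreal (\<psi> t)"
proof -
  define S where "S = {s. 0 \<le> s \<and> distrib_fun (\<lambda>x::'a. \<psi> (ball_vol x)) s \<le> ennreal t}"
  have "\<psi> t \<in> S"
    using distrib_fun_radial_le[OF anti nonneg \<open>0 < t\<close>, where 'a='a] nonneg by (simp add: S_def)
  obtain u where "t < u" "\<psi> u = \<psi> t"
    using right_const by blast
  have "\<psi> t \<le> s" if "s \<in> S" for s
  proof (rule ccontr)
    assume "\<not> \<psi> t \<le> s"
    then have "ennreal u \<le> distrib_fun (\<lambda>x::'a. \<psi> (ball_vol x)) s"
      using \<open>t < u\<close> \<open>0 < t\<close> \<open>\<psi> u = \<psi> t\<close> by (intro distrib_fun_radial_ge[OF anti nonneg]) auto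
    also have "\<dots> \<le> ennreal t"
      using that by (simp add: S_def)
    finally show False
      using \<open>t < u\<close> \<open>0 < t\<close> by simp
  qed
  with \<open>\<psi> t \<in> S\<close> have "Inf (ennreal ` S) = ennreal (\<psi> t)"
    by (intro antisym Inf_lower imageI) (auto intro!: Inf_greatest ennreal_leI)
  then show ?thesis
    unfolding rearr_def S_def .
qed

section \<open>The maximal function\<close>

lemma rearr_antimono: "antimono (rearr f)"
  unfolding rearr_def
proof (rule antimonoI, rule Inf_superset_mono, rule image_mono)
  fix t t' :: real
  assume "t \<le> t'"
  then show "{s. 0 \<le> s \<and> distrib_fun f s \<le> ennreal t} \<subseteq> {s. 0 \<le> s \<and> distrib_fun f s \<le> ennreal t'}"
    using ennreal_leI order_trans by blast
qed

lemma borel_measurable_rearr[measurable]: "rearr f \<in> borel_measurable borel"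
  by (rule borel_measurable_antimono[OF rearr_antimono])

definition rearr_integral :: "('a::euclidean_space \<Rightarrow> real) \<Rightarrow> real \<Rightarrow> ennreal" where
  "rearr_integral f t = (\<integral>\<^sup>+ s\<in>{0<..<t}. rearr f s \<partial>lborel)"

lemma max_rearr_eq_rearr_integral: "max_rearr f t = ennreal (1 / t) * rearr_integral f t"
  unfolding max_rearr_def rearr_integral_def ..

lemma mult_max_rearr: "0 < t \<Longrightarrow> ennreal t * max_rearr f t = rearr_integral f t"
  unfolding max_rearr_eq_rearr_integral by (simp add: mult.assoc[symmetric] ennreal_mult[symmetric])

lemma rearr_integral_mono: "t \<le> t' \<Longrightarrow> rearr_integral f t \<le> rearr_integral f t'"
  unfolding rearr_integral_def by (intro nn_integral_mono) (auto simp: indicator_def)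

lemma mult_rearr_le_rearr_integral:
  assumes "0 < t"
  shows "ennreal t * rearr f t \<le> rearr_integral f t"
proof -
  have "ennreal t * rearr f t = (\<integral>\<^sup>+ s. rearr f t * indicator {0<..<t} s \<partial>lborel)"
    using assms by (simp add: nn_integral_cmult_indicator mult.commute)
  also have "\<dots> \<le> rearr_integral f t"
    unfolding rearr_integral_def
    by (intro nn_integral_mono) (auto simp: indicator_def intro: antimonoD[OF rearr_antimono])
  finally show ?thesis .
qed

lemma rearr_le_max_rearr:
  assumes "0 < t"
  shows "rearr f t \<le> max_rearr f t"
proof -
  have "rearr f t = ennreal (1 / t) * (ennreal t * rearr f t)"
    using assms by (simp add: mult.assoc[symmetric] ennreal_mult[symmetric])
  also have "\<dots> \<le> max_rearr f t"
    unfolding max_rearr_eq_rearr_integral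
    by (intro mult_left_mono mult_rearr_le_rearr_integral assms) simp
  finally show ?thesis .
qed

lemma max_rearr_antimono:
  assumes "0 < s" "s \<le> t"
  shows "max_rearr f t \<le> max_rearr f s"
proof -
  have tail: "rearr_integral f t \<le> rearr_integral f s + ennreal (t - s) * rearr f s"
  proof -
    have "rearr_integral f t
        \<le> (\<integral>\<^sup>+ x. rearr f x * indicator {0<..<s} x + rearr f s * indicator {s..<t} x \<partial>lborel)"
      unfolding rearr_integral_def
      by (intro nn_integral_mono) (auto simp: indicator_def intro: antimonoD[OF rearr_antimono])
    also have "\<dots> = rearr_integral f s + ennreal (t - s) * rearr f s"
      using assms unfolding rearr_integral_def
      by (subst nn_integral_add) (auto simp: nn_integral_cmult_indicator mult.commute)
    finally show ?thesis .
  qed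
  have "ennreal s * rearr_integral f t
      \<le> ennreal s * rearr_integral f s + ennreal (t - s) * (ennreal s * rearr f s)"
    using mult_left_mono[OF tail, of "ennreal s"] by (simp add: distrib_left mult.left_commute)
  also have "\<dots> \<le> ennreal s * rearr_integral f s + ennreal (t - s) * rearr_integral f s"
    by (intro add_left_mono mult_left_mono mult_rearr_le_rearr_integral assms(1)) simp
  also have "\<dots> = ennreal t * rearr_integral f s"
    using assms by (simp add: distrib_right[symmetric] ennreal_plus[symmetric] del: ennreal_plus)
  finally have "ennreal s * rearr_integral f t \<le> ennreal t * rearr_integral f s" .
  then have "ennreal (1 / (s * t)) * (ennreal s * rearr_integral f t)
      \<le> ennreal (1 / (s * t)) * (ennreal t * rearr_integral f s)"
    by (rule mult_left_mono) simp
  then show ?thesis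
    using assms unfolding max_rearr_eq_rearr_integral
    by (simp add: mult.assoc[symmetric] ennreal_mult[symmetric])
qed

lemma max_rearr_double:
  assumes "0 < a"
  shows "ennreal (1 / 2) * max_rearr f a \<le> max_rearr f (2 * a)"
proof -
  have "ennreal (1 / (2 * a)) = ennreal (1 / 2) * ennreal (1 / a)"
    using assms by (subst ennreal_mult[symmetric]) auto
  then have "ennreal (1 / 2) * max_rearr f a = ennreal (1 / (2 * a)) * rearr_integral f a"
    by (simp only: max_rearr_eq_rearr_integral mult.assoc)
  also have "\<dots> \<le> ennreal (1 / (2 * a)) * rearr_integral f (2 * a)"
    using assms by (intro mult_left_mono rearr_integral_mono) auto
  finally show ?thesis
    unfolding max_rearr_eq_rearr_integral .
qed

section \<open>Real powers of extended nonnegative reals\<close>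

lemma epowr_ennreal: "0 \<le> x \<Longrightarrow> epowr (ennreal x) q = ennreal (x powr q)"
  unfolding epowr_def by simp

lemma epowr_mono:
  assumes "0 < q" "x \<le> y"
  shows "epowr x q \<le> epowr y q"
proof (cases "y = top")
  case False
  then have "x \<noteq> top"
    using assms top_unique by auto
  then show ?thesis
    using False assms unfolding epowr_def
    by (auto intro!: ennreal_leI powr_mono2 enn2real_mono simp: top.not_eq_extremum)
qed (simp add: epowr_def)

lemma epowr_cmult:
  assumes "0 < c"
  shows "epowr (ennreal c * x) q = ennreal (c powr q) * epowr x q"
proof (cases "x = top")
  case False
  then obtain r where "x = ennreal r" "0 \<le> r"
    by (cases x) auto
  then show ?thesis
    using assms by (simp add: ennreal_mult[symmetric] epowr_ennreal powr_mult)
qed (use assms in \<open>simp add: epowr_def ennreal_mult_top\<close>)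

lemma epowr_epowr_inverse:
  assumes "0 < q"
  shows "epowr (epowr x q) (1 / q) = x"
proof (cases "x = top")
  case False
  then obtain r where "x = ennreal r" "0 \<le> r"
    by (cases x) auto
  then show ?thesis
    using assms by (simp add: epowr_ennreal powr_powr)
qed (simp add: epowr_def)

lemma le_powr_if_epowr_le:
  assumes "0 < q" "epowr x (1 / q) \<le> ennreal y" "0 \<le> y"
  shows "x \<le> ennreal (y powr q)"
proof -
  have "x = epowr (epowr x (1 / q)) (1 / (1 / q))"
    using epowr_epowr_inverse[of "1 / q" x] assms by simp
  also have "\<dots> \<le> epowr (ennreal y) (1 / (1 / q))"
    using assms by (intro epowr_mono) auto
  also have "\<dots> = ennreal (y powr q)"
    using assms by (simp add: epowr_ennreal)
  finally show ?thesis .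
qed

section \<open>Radial step functions\<close>

definition step_profile :: "(nat \<Rightarrow> real) \<Rightarrow> (nat \<Rightarrow> real) \<Rightarrow> nat \<Rightarrow> real \<Rightarrow> real" where
  "step_profile c s K u = (\<Sum>k<K. c k * indicator {..<s k} u)"

lemma step_profile_nonneg: "(\<And>k. 0 \<le> c k) \<Longrightarrow> 0 \<le> step_profile c s K u"
  unfolding step_profile_def by (intro sum_nonneg) auto

lemma step_profile_antimono: "(\<And>k. 0 \<le> c k) \<Longrightarrow> antimono (step_profile c s K)"
  unfolding step_profile_def by (intro antimonoI sum_mono) (auto simp: indicator_def)

lemma ex_greater_same_side:
  fixes t :: real
  assumes "finite B"
  shows "\<exists>u>t. \<forall>b\<in>B. u < b \<longleftrightarrow> t < b"
proof -
  define m where "m = Min (insert (t + 1) {b\<in>B. t < b})"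
  have "t < m"
    using assms by (simp add: m_def)
  have "m \<le> b" if "b \<in> B" "t < b" for b
    using assms that by (simp add: m_def)
  then show ?thesis
    using \<open>t < m\<close> by (intro exI[of _ "(t + m) / 2"]) force
qed

lemma step_profile_right_const: "\<exists>u'>u. step_profile c s K u' = step_profile c s K u"
proof -
  obtain u' where "u < u'" "\<forall>b\<in>s ` {..<K}. u' < b \<longleftrightarrow> u < b"
    using ex_greater_same_side[of "s ` {..<K}" u] by blast
  then show ?thesis
    unfolding step_profile_def by (intro exI[of _ u'] conjI sum.cong) (auto simp: indicator_def)
qed

definition radial_step :: "(nat \<Rightarrow> real) \<Rightarrow> (nat \<Rightarrow> real) \<Rightarrow> nat \<Rightarrow> 'a::euclidean_space \<Rightarrow> real" where
  "radial_step c s K x = step_profile c s K (ball_vol x)"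

abbreviation ball_indicator :: "real \<Rightarrow> 'a::euclidean_space \<Rightarrow> real" where
  "ball_indicator s \<equiv> radial_step (\<lambda>_. 1) (\<lambda>_. s) 1"

lemma borel_measurable_radial_step:
  "(\<And>k. 0 \<le> c k) \<Longrightarrow> radial_step c s K \<in> borel_measurable lebesgue"
  unfolding radial_step_def[abs_def] by (intro borel_measurable_radial step_profile_antimono)

lemma rearr_radial_step:
  assumes "\<And>k. 0 \<le> c k" "0 < t"
  shows "rearr (radial_step c s K :: 'a::euclidean_space \<Rightarrow> real) t = ennreal (step_profile c s K t)"
  unfolding radial_step_def[abs_def]
  using assms
  by (intro rearr_radial step_profile_antimono step_profile_nonneg step_profile_right_const)

lemma step_profile_indicator:
  assumes "\<And>k. 0 \<le> c k"
  shows "ennreal (step_profile c s K u) * indicator A u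
    = (\<Sum>k<K. ennreal (c k) * indicator (A \<inter> {..<s k}) u)"
  unfolding step_profile_def using assms
  by (subst sum_ennreal[symmetric]) (auto simp: indicator_def sum_distrib_right intro!: sum.cong)

lemma max_rearr_radial_step:
  assumes "\<And>k. 0 \<le> c k" "\<And>k. 0 < s k" "0 < t"
  shows "max_rearr (radial_step c s K :: 'a::euclidean_space \<Rightarrow> real) t
    = ennreal ((\<Sum>k<K. c k * min t (s k)) / t)"
proof -
  have "rearr_integral (radial_step c s K :: 'a \<Rightarrow> real) t
      = (\<integral>\<^sup>+ u. ennreal (step_profile c s K u) * indicator {0<..<t} u \<partial>lborel)"
    unfolding rearr_integral_def using rearr_radial_step[OF assms(1)]
    by (intro nn_integral_cong) (auto simp: indicator_def)
  also have "\<dots> = (\<Sum>k<K. \<integral>\<^sup>+ u. ennreal (c k) * indicator ({0<..<t} \<inter> {..<s k}) u \<partial>lborel)"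
    unfolding step_profile_indicator[OF assms(1)] by (intro nn_integral_sum) auto
  also have "\<dots> = (\<Sum>k<K. ennreal (c k) * emeasure lborel ({0<..<t} \<inter> {..<s k}))"
    by (intro sum.cong refl nn_integral_cmult_indicator) simp
  also have "\<dots> = (\<Sum>k<K. ennreal (c k * min t (s k)))"
  proof (intro sum.cong refl)
    fix k
    have "{0<..<t} \<inter> {..<s k} = {0<..<min t (s k)}"
      by auto
    then show "ennreal (c k) * emeasure lborel ({0<..<t} \<inter> {..<s k}) = ennreal (c k * min t (s k))"
      using assms by (simp add: ennreal_mult less_imp_le)
  qed
  also have "\<dots> = ennreal (\<Sum>k<K. c k * min t (s k))"
    using assms by (intro sum_ennreal) (simp add: less_imp_le)
  finally show ?thesis
    using assms unfolding max_rearr_eq_rearr_integral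
    by (simp add: ennreal_mult[symmetric] sum_nonneg less_imp_le)
qed

lemma borel_measurable_weight_indicator:
  assumes "is_weight v" "A \<subseteq> {0<..}" "A \<in> sets borel"
  shows "(\<lambda>x. ennreal (v x) * indicator A x) \<in> borel_measurable borel"
proof -
  have "(\<lambda>x. indicator {0<..} x *\<^sub>R v x) \<in> borel_measurable borel"
    using assms(1) unfolding is_weight_def set_borel_measurable_def by simp
  moreover have
    "ennreal (v x) * indicator A x = ennreal (indicator {0<..} x *\<^sub>R v x) * indicator A x" for x
    using assms(2) by (auto simp: indicator_def)
  ultimately show ?thesis
    using assms(3) by simp
qed

lemma Lambda1_norm_radial_step:
  assumes "is_weight w" "\<And>k. 0 \<le> c k" "\<And>k. 0 < s k"
  shows "Lambda1_norm w (radial_step c s K :: 'a::euclidean_space \<Rightarrow> real)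
    = (\<Sum>k<K. ennreal (c k) * Wprim w (s k))"
proof -
  have [measurable]: "(\<lambda>t. ennreal (w t) * indicator {0<..<s k} t) \<in> borel_measurable borel" for k
    by (rule borel_measurable_weight_indicator[OF assms(1)]) auto
  have "Lambda1_norm w (radial_step c s K :: 'a \<Rightarrow> real)
      = (\<integral>\<^sup>+ t. (\<Sum>k<K. ennreal (c k) * (ennreal (w t) * indicator {0<..<s k} t)) \<partial>lborel)"
    unfolding Lambda1_norm_def
  proof (intro nn_integral_cong)
    fix t
    have "ennreal (step_profile c s K t) * indicator {0<..} t * ennreal (w t)
        = (\<Sum>k<K. ennreal (c k) * (ennreal (w t) * indicator {0<..<s k} t))"
      unfolding step_profile_indicator[OF assms(2)] sum_distrib_right
      by (intro sum.cong refl) (auto simp: indicator_def)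
    then show "rearr (radial_step c s K :: 'a \<Rightarrow> real) t * ennreal (w t) * indicator {0<..} t
        = (\<Sum>k<K. ennreal (c k) * (ennreal (w t) * indicator {0<..<s k} t))"
      using rearr_radial_step[where 'a='a and c=c and s=s and K=K, OF assms(2)]
      by (cases "0 < t") (auto simp: indicator_def mult_ac)
  qed
  also have "\<dots> = (\<Sum>k<K. ennreal (c k) * Wprim w (s k))"
    unfolding Wprim_def by (subst nn_integral_sum) (auto simp: nn_integral_cmult)
  finally show ?thesis .
qed

definition ball_gamma :: "real \<Rightarrow> (real \<Rightarrow> real) \<Rightarrow> real \<Rightarrow> ennreal" where
  "ball_gamma q v s = (\<integral>\<^sup>+ t\<in>{0<..}. ennreal ((min t s / t) powr q) * ennreal (v t) \<partial>lborel)"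

lemma Gamma_norm_ball_indicator:
  assumes "0 < s"
  shows "Gamma_norm q v (ball_indicator s :: 'a::euclidean_space \<Rightarrow> real)
      = epowr (ball_gamma q v s) (1 / q)"
proof -
  have "epowr (max_rearr (ball_indicator s :: 'a \<Rightarrow> real) t) q
      = ennreal ((min t s / t) powr q)" if "0 < t" for t
    using max_rearr_radial_step[where 'a='a, of "\<lambda>_. 1" "\<lambda>_. s" t 1] assms that
    by (simp add: epowr_ennreal)
  then show ?thesis
    unfolding Gamma_norm_def ball_gamma_def
    by (intro arg_cong[where f="\<lambda>x. epowr x (1 / q)"] nn_integral_cong) (simp add: indicator_def)
qed

lemma Lambda1_norm_ball_indicator:
  assumes "is_weight w" "0 < s"
  shows "Lambda1_norm w (ball_indicator s :: 'a::euclidean_space \<Rightarrow> real) = Wprim w s"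
  using Lambda1_norm_radial_step[OF assms(1), of "\<lambda>_. 1" "\<lambda>_. s" 1] assms(2) by simp

lemma ball_gamma_integrand_split:
  assumes "0 \<le> y" "0 < r" "0 < x" "x \<noteq> r"
  shows "ennreal ((min x r / x) powr q) * ennreal y
    = ennreal y * indicator {0<..<r} x
      + ennreal (r powr q) * (ennreal y * indicator {r<..} x * ennreal (x powr (- q)))"
proof (cases "x < r")
  case False
  then have "r < x"
    using assms(4) by simp
  moreover have "(r / x) powr q = r powr q * x powr (- q)"
    using assms(2,3) powr_divide[of r x q] by (simp add: powr_minus divide_inverse)
  ultimately show ?thesis
    using assms(1) by (simp add: ennreal_mult[symmetric] mult_ac indicator_def)
qed (use assms in \<open>auto simp: indicator_def\<close>)

text \<open>The right-hand side of the condition on \<open>w\<^sub>q\<close> in (ii) is \<open>ball_gamma q w\<^sub>q r\<close>: the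
  condition says that the \<open>\<Lambda>\<^sup>1(w)\<close>- and \<open>\<Gamma>\<^sup>q(w\<^sub>q)\<close>-norms of indicators of balls are comparable.\<close>
lemma ball_gamma_split:
  assumes "is_weight v" "0 < r"
  shows "ball_gamma q v r = (\<integral>\<^sup>+ x\<in>{0<..<r}. ennreal (v x) \<partial>lborel)
    + ennreal (r powr q) * (\<integral>\<^sup>+ x\<in>{r<..}. ennreal (v x * x powr (- q)) \<partial>lborel)"
proof -
  have [measurable]: "(\<lambda>x. ennreal (v x) * indicator {0<..<r} x) \<in> borel_measurable borel"
    "(\<lambda>x. ennreal (v x) * indicator {r<..} x) \<in> borel_measurable borel"
    using assms by (auto intro!: borel_measurable_weight_indicator)
  have v_nonneg: "0 < x \<Longrightarrow> 0 \<le> v x" for x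
    using assms(1) unfolding is_weight_def by simp
  have "ball_gamma q v r = (\<integral>\<^sup>+ x. ennreal (v x) * indicator {0<..<r} x
      + ennreal (r powr q) * (ennreal (v x) * indicator {r<..} x * ennreal (x powr (- q))) \<partial>lborel)"
    unfolding ball_gamma_def
  proof (rule nn_integral_cong_AE)
    show "AE x in lborel. ennreal ((min x r / x) powr q) * ennreal (v x) * indicator {0<..} x
        = ennreal (v x) * indicator {0<..<r} x
          + ennreal (r powr q) * (ennreal (v x) * indicator {r<..} x * ennreal (x powr (- q)))"
      using AE_lborel_singleton[of r]
      by eventually_elim
        (use assms(2) in \<open>auto simp: ball_gamma_integrand_split v_nonneg indicator_def\<close>)
  qed
  also have "\<dots> = (\<integral>\<^sup>+ x\<in>{0<..<r}. ennreal (v x) \<partial>lborel)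
      + ennreal (r powr q)
        * (\<integral>\<^sup>+ x. ennreal (v x) * indicator {r<..} x * ennreal (x powr (- q)) \<partial>lborel)"
    by (simp add: nn_integral_add nn_integral_cmult)
  also have "(\<integral>\<^sup>+ x. ennreal (v x) * indicator {r<..} x * ennreal (x powr (- q)) \<partial>lborel)
      = (\<integral>\<^sup>+ x\<in>{r<..}. ennreal (v x * x powr (- q)) \<partial>lborel)"
    using assms(2) v_nonneg by (intro nn_integral_cong) (auto simp: indicator_def ennreal_mult)
  finally show ?thesis .
qed

lemma ball_gamma_scaled:
  assumes "is_weight v" "0 < N"
  shows "ennreal ((1 / N) powr q) * ball_gamma q v N
    = (\<integral>\<^sup>+ t. ennreal (min (1 / N) (1 / t) powr q * (indicator {0<..} t * v t)) \<partial>lborel)"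
proof -
  have v_nonneg: "0 < t \<Longrightarrow> 0 \<le> v t" for t
    using assms(1) unfolding is_weight_def by simp
  have "ennreal (min (1 / N) (1 / t) powr q * (indicator {0<..} t * v t))
      = ennreal ((1 / N) powr q)
        * (ennreal ((min t N / t) powr q) * ennreal (v t) * indicator {0<..} t)" for t
  proof (cases "0 < t")
    case True
    have "min (1 / N) (1 / t) = 1 / N * (min t N / t)"
      using True assms(2) by (cases "t \<le> N") (auto simp: min_def divide_simps)
    then have "min (1 / N) (1 / t) powr q = (1 / N) powr q * (min t N / t) powr q"
      using True assms(2) by (simp only: powr_mult)
    then show ?thesis
      using True v_nonneg by (simp add: ennreal_mult[symmetric] mult_ac)
  qed simp
  moreover have
    "(\<lambda>t. ennreal ((min t N / t) powr q) * ennreal (v t) * indicator {0<..} t)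
      \<in> borel_measurable lborel"
    using borel_measurable_weight_indicator[OF assms(1), of "{0<..}"] by (simp add: mult.assoc)
  ultimately show ?thesis
    unfolding ball_gamma_def by (simp add: nn_integral_cmult)
qed

lemma INF_min_inverse_powr_mult:
  fixes c q t :: real
  assumes "0 < q" "0 \<le> c" "0 < t"
  shows "(INF n. ennreal (min (1 / real (Suc n)) (1 / t) powr q * c)) = 0"
proof -
  have "(\<lambda>n. (1 / real (Suc n)) powr q) \<longlonglongrightarrow> 0"
    using assms(1) by (intro tendsto_zero_powrI LIMSEQ_Suc[OF lim_const_over_n]) auto
  then have "(\<lambda>n. ennreal ((1 / real (Suc n)) powr q * c)) \<longlonglongrightarrow> ennreal 0"
    by (intro tendsto_ennrealI tendsto_mult_left_zero)
  moreover have "min (1 / real (Suc n)) (1 / t) powr q * c \<le> (1 / real (Suc n)) powr q * c" for n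
    using assms by (intro mult_right_mono powr_mono2) auto
  ultimately have "(INF n. ennreal (min (1 / real (Suc n)) (1 / t) powr q * c)) \<le> 0"
    by (intro LIMSEQ_le_const) (auto intro: INF_lower2 ennreal_leI)
  then show ?thesis
    by simp
qed

lemma ball_gamma_div_powr_tendsto_0:
  assumes "is_weight v" "0 < q" "ball_gamma q v 1 < \<infinity>"
  shows "(\<lambda>n. ennreal ((1 / real (Suc n)) powr q) * ball_gamma q v (real (Suc n))) \<longlonglongrightarrow> 0"
proof -
  define g where
    "g n t = ennreal (min (1 / real (Suc n)) (1 / t) powr q * (indicator {0<..} t * v t))" for n t
  have v_nonneg: "0 \<le> indicator {0<..} t * v t" for t
    using assms(1) unfolding is_weight_def by (simp add: indicator_def)
  have [measurable]: "(\<lambda>t. indicator {0<..} t * v t) \<in> borel_measurable borel"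
    using assms(1) unfolding is_weight_def set_borel_measurable_def by simp
  have INF_g: "(INF n. g n t) = 0" for t
    using INF_min_inverse_powr_mult[OF assms(2) v_nonneg[of t], of t]
    by (cases "0 < t") (simp_all add: g_def)
  have "decseq g"
  proof (intro decseq_SucI le_funI)
    fix n t
    have "min (1 / real (Suc (Suc n))) (1 / t) \<le> min (1 / real (Suc n)) (1 / t)"
      by (intro min.mono) (auto simp: divide_simps)
    then show "g (Suc n) t \<le> g n t"
      unfolding g_def using assms(2) v_nonneg[of t]
      by (cases "0 < t") (auto intro!: mult_right_mono ennreal_leI powr_mono2)
  qed
  moreover have "g n \<in> borel_measurable lborel" for n
    unfolding g_def[abs_def] by measurable
  moreover have "(\<integral>\<^sup>+ t. g 0 t \<partial>lborel) < \<infinity>"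
    using ball_gamma_scaled[OF assms(1), of 1 q] assms(3) by (simp add: g_def)
  ultimately have "(\<integral>\<^sup>+ t. (INF n. g n t) \<partial>lborel) = (INF n. \<integral>\<^sup>+ t. g n t \<partial>lborel)"
    by (intro nn_integral_monotone_convergence_INF_decseq)
  then have "(INF n. \<integral>\<^sup>+ t. g n t \<partial>lborel) = 0"
    unfolding INF_g by simp
  moreover have "decseq (\<lambda>n. \<integral>\<^sup>+ t. g n t \<partial>lborel)"
    using antimonoD[OF \<open>decseq g\<close>] by (intro antimonoI nn_integral_mono) (simp add: le_fun_def)
  ultimately have "(\<lambda>n. \<integral>\<^sup>+ t. g n t \<partial>lborel) \<longlonglongrightarrow> 0"
    using LIMSEQ_INF by metis
  then show ?thesis
    using ball_gamma_scaled[OF assms(1)] by (simp add: g_def)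
qed

lemma sum_doubling_le:
  fixes v :: "nat \<Rightarrow> real"
  assumes "\<And>k. 2 * v k \<le> v (Suc k)" "\<And>k. 0 \<le> v k"
  shows "(\<Sum>k\<le>m. v k) \<le> 2 * v m"
proof (induction m)
  case (Suc m)
  then show ?case
    using assms(1)[of m] by simp
qed (simp add: assms(2))

lemma sum_halving_le:
  fixes u :: "nat \<Rightarrow> real"
  assumes "\<And>k. 2 * u (Suc k) \<le> u k" "\<And>k. 0 \<le> u k"
  shows "(\<Sum>k\<in>{j..<K}. u k) \<le> 2 * u j"
proof (cases "j \<le> K")
  case True
  have "(\<Sum>k\<in>{j..<K}. u k) + 2 * u K \<le> 2 * u j"
    using True
  proof (induction K rule: dec_induct)
    case (step K)
    then show ?case
      using assms(1)[of K] by simp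
  qed simp
  then show ?thesis
    using assms(2)[of K] by simp
qed (simp add: assms(2))

lemma ex_crossover:
  fixes u v :: "nat \<Rightarrow> real"
  assumes "antimono u" "mono v"
  obtains c where "c \<le> K" "\<And>k. k < c \<Longrightarrow> v k \<le> u k" "\<And>k. c \<le> k \<Longrightarrow> k < K \<Longrightarrow> u k < v k"
proof -
  define c where "c = (LEAST k. K \<le> k \<or> u k < v k)"
  have "c \<le> K"
    unfolding c_def by (rule Least_le) simp
  moreover have "v k \<le> u k" if "k < c" for k
    using not_less_Least[OF that[unfolded c_def]] by auto
  moreover have "u k < v k" if "c \<le> k" "k < K" for k
  proof -
    have "K \<le> c \<or> u c < v c"
      unfolding c_def by (rule LeastI[of _ K]) simp
    then show ?thesis
      using that antimonoD[OF assms(1) that(1)] monoD[OF assms(2) that(1)] by linarith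
  qed
  ultimately show ?thesis
    using that by blast
qed

text \<open>Below the crossover index the terms are a doubling sequence, above it a halving one; each
  part is at most twice its largest term.\<close>
lemma sum_min_opposite_geometric_le:
  fixes u v :: "nat \<Rightarrow> real"
  assumes u_nonneg: "\<And>k. 0 \<le> u k" and v_nonneg: "\<And>k. 0 \<le> v k"
    and u_halving: "\<And>k. 2 * u (Suc k) \<le> u k" and v_doubling: "\<And>k. 2 * v k \<le> v (Suc k)"
    and "0 \<le> M" and le_M: "\<And>k. k < K \<Longrightarrow> min (u k) (v k) \<le> M"
  shows "(\<Sum>k<K. min (u k) (v k)) \<le> 4 * M"
proof -
  have "u (Suc k) \<le> u k" "v k \<le> v (Suc k)" for k
    using u_halving[of k] u_nonneg[of "Suc k"] v_doubling[of k] v_nonneg[of k] by linarith+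
  then have "antimono u" "mono v"
    by (auto intro: decseq_SucI incseq_SucI)
  then obtain c where "c \<le> K" and below: "\<And>k. k < c \<Longrightarrow> v k \<le> u k"
    and above: "\<And>k. c \<le> k \<Longrightarrow> k < K \<Longrightarrow> u k < v k"
    using ex_crossover[of u v K] by blast
  have "(\<Sum>k<c. min (u k) (v k)) \<le> 2 * M"
  proof (cases c)
    case (Suc p)
    have "(\<Sum>k<c. min (u k) (v k)) = (\<Sum>k\<le>p. v k)"
      using below by (simp add: Suc lessThan_Suc_atMost[symmetric] min_absorb2)
    also have "\<dots> \<le> 2 * v p"
      by (rule sum_doubling_le[of v, OF v_doubling v_nonneg])
    also have "v p \<le> M"
      using le_M[of p] below[of p] \<open>c \<le> K\<close> by (simp add: Suc min_absorb2)
    finally show ?thesis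
      by simp
  qed (simp add: \<open>0 \<le> M\<close>)
  moreover have "(\<Sum>k\<in>{c..<K}. min (u k) (v k)) \<le> 2 * M"
  proof (cases "c < K")
    case True
    have "(\<Sum>k\<in>{c..<K}. min (u k) (v k)) = (\<Sum>k\<in>{c..<K}. u k)"
      using above by (intro sum.cong) (auto simp: min_absorb1 less_imp_le)
    also have "\<dots> \<le> 2 * u c"
      by (rule sum_halving_le[of u, OF u_halving u_nonneg])
    also have "u c \<le> M"
      using le_M[OF True] above[OF order_refl True] by (simp add: min_absorb1 less_imp_le)
    finally show ?thesis
      by simp
  qed (simp add: \<open>0 \<le> M\<close>)
  moreover have "(\<Sum>k<K. min (u k) (v k))
      = (\<Sum>k<c. min (u k) (v k)) + (\<Sum>k\<in>{c..<K}. min (u k) (v k))"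
    using \<open>c \<le> K\<close> by (simp add: lessThan_atLeast0 sum.atLeastLessThan_concat)
  ultimately show ?thesis
    by linarith
qed

lemma sum_min_opposite_geometric:
  fixes u v :: "nat \<Rightarrow> real"
  assumes "\<And>k. 0 \<le> u k" "\<And>k. 0 \<le> v k" "\<And>k. 2 * u (Suc k) \<le> u k" "\<And>k. 2 * v k \<le> v (Suc k)"
    and "0 < K"
  shows "\<exists>j<K. (\<Sum>k<K. min (u k) (v k)) \<le> 4 * min (u j) (v j)"
proof -
  define M where "M = Max ((\<lambda>k. min (u k) (v k)) ` {..<K})"
  have "M \<in> (\<lambda>k. min (u k) (v k)) ` {..<K}"
    unfolding M_def using \<open>0 < K\<close> by (intro Max_in) auto
  then obtain j where "j < K" "min (u j) (v j) = M"
    by auto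
  then have "0 \<le> M"
    using assms(1,2) by (metis min.boundedI)
  then have "(\<Sum>k<K. min (u k) (v k)) \<le> 4 * M"
    using assms(1-4) by (intro sum_min_opposite_geometric_le) (auto simp: M_def)
  with \<open>j < K\<close> \<open>min (u j) (v j) = M\<close> show ?thesis
    by blast
qed

lemma ex_nat_mult_powr_less:
  fixes c q :: real
  assumes "1 < q"
  shows "\<exists>K::nat. 0 < K \<and> c * real K powr (1 / q) < real K"
proof -
  have "((\<lambda>K. real K powr (1 / q - 1)) \<longlongrightarrow> 0) sequentially"
    using assms by (intro tendsto_neg_powr filterlim_real_sequentially) (simp add: field_simps)
  then have "\<forall>\<^sub>F K in sequentially. real K powr (1 / q - 1) < 1 / (\<bar>c\<bar> + 1)"
    by (rule order_tendstoD) simp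
  moreover have "\<forall>\<^sub>F K in sequentially. 0 < K"
    by (rule eventually_gt_at_top)
  ultimately obtain K where "0 < K" "real K powr (1 / q - 1) < 1 / (\<bar>c\<bar> + 1)"
    by (metis (mono_tags, lifting) eventually_conj eventually_sequentially order_refl)
  then have "(\<bar>c\<bar> + 1) * real K powr (1 / q - 1) < 1"
    by (simp add: field_simps add_pos_nonneg)
  then have "(\<bar>c\<bar> + 1) * real K powr (1 / q - 1) * real K < real K"
    using \<open>0 < K\<close> by simp
  moreover have "real K powr (1 / q - 1) * real K = real K powr (1 / q)"
    using \<open>0 < K\<close> by (simp add: powr_diff)
  ultimately have "(\<bar>c\<bar> + 1) * real K powr (1 / q) < real K"
    by (simp add: mult.assoc)
  moreover have "c * real K powr (1 / q) \<le> (\<bar>c\<bar> + 1) * real K powr (1 / q)"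
    by (intro mult_right_mono) auto
  ultimately have "c * real K powr (1 / q) < real K"
    by linarith
  with \<open>0 < K\<close> show ?thesis
    by blast
qed

lemma comparable_via_common:
  fixes N1 N2 X :: "'b \<Rightarrow> ennreal"
  assumes "0 < c" "0 < c'" "0 < d" "0 < d'"
    and "\<And>x. P x \<Longrightarrow> N1 x \<le> ennreal c * X x \<and> ennreal c' * X x \<le> N1 x"
    and "\<And>x. P x \<Longrightarrow> N2 x \<le> ennreal d * X x \<and> ennreal d' * X x \<le> N2 x"
  shows "\<exists>C>0. \<forall>x. P x \<longrightarrow> N1 x \<le> ennreal C * N2 x \<and> N2 x \<le> ennreal C * N1 x"
proof (intro exI[of _ "c / d' + d / c'"] conjI allI impI)
  show "0 < c / d' + d / c'"
    using assms(1-4) by (simp add: add_pos_pos)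
  have bound: "N x \<le> ennreal (c / d' + d / c') * N' x"
    if "N x \<le> ennreal k * X x" "ennreal k' * X x \<le> N' x" "0 \<le> k" "0 < k'"
      "k / k' \<le> c / d' + d / c'"
    for N N' :: "'b \<Rightarrow> ennreal" and k k' x
  proof -
    have "ennreal k = ennreal (k / k') * ennreal k'"
      using that(3,4) by (simp add: ennreal_mult[symmetric])
    then have "N x \<le> ennreal (k / k') * (ennreal k' * X x)"
      using that(1) by (simp add: mult.assoc)
    also have "\<dots> \<le> ennreal (c / d' + d / c') * N' x"
      using that(2,5) by (intro mult_mono ennreal_leI) auto
    finally show ?thesis .
  qed
  fix x
  assume "P x"
  show "N1 x \<le> ennreal (c / d' + d / c') * N2 x"
    using assms(1-4) assms(5,6)[OF \<open>P x\<close>]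
    by (intro bound[where N=N1 and N'=N2 and k=c and k'=d']) auto
  show "N2 x \<le> ennreal (c / d' + d / c') * N1 x"
    using assms(1-4) assms(5,6)[OF \<open>P x\<close>]
    by (intro bound[where N=N2 and N'=N1 and k=d and k'=c']) auto
qed

lemma equiv_on_pos_cong_right:
  assumes "equiv_on_pos A B" "\<And>r. 0 < r \<Longrightarrow> B r = B' r"
  shows "equiv_on_pos A B'"
  using assms unfolding equiv_on_pos_def by simp

section \<open>Indicator weights\<close>

lemma is_weight_indicator: "is_weight (indicator {a<..<b})"
proof -
  have "set_integrable lborel {x..y} (indicator {a<..<b} :: real \<Rightarrow> real)" for x y
  proof -
    have "integrable lborel (indicator ({x..y} \<inter> {a<..<b}) :: real \<Rightarrow> real)"
      by (intro integrable_real_indicator emeasure_bounded_finite) auto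
    then show ?thesis
      unfolding set_integrable_def by (simp add: indicator_inter_arith[symmetric])
  qed
  then show ?thesis
    unfolding is_weight_def set_borel_measurable_def by simp
qed

lemma nn_integral_const_indicator_double:
  "0 < a \<Longrightarrow> (\<integral>\<^sup>+ t. c * indicator {a<..<2 * a} t \<partial>lborel) = c * ennreal a"
  by (simp add: nn_integral_cmult_indicator)

lemma Gamma_norm_indicator_le:
  assumes "0 < a" "0 < q"
  shows "Gamma_norm q (indicator {a<..<2 * a}) f \<le> ennreal (a powr (1 / q)) * max_rearr f a"
proof -
  have "(\<integral>\<^sup>+ t\<in>{0<..}. epowr (max_rearr f t) q * ennreal (indicator {a<..<2 * a} t) \<partial>lborel)
      \<le> (\<integral>\<^sup>+ t. epowr (max_rearr f a) q * indicator {a<..<2 * a} t \<partial>lborel)"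
    using assms
    by (intro nn_integral_mono) (auto simp: indicator_def intro!: epowr_mono max_rearr_antimono)
  also have "\<dots> = ennreal a * epowr (max_rearr f a) q"
    unfolding nn_integral_const_indicator_double[OF \<open>0 < a\<close>] by (simp add: mult.commute)
  finally have "Gamma_norm q (indicator {a<..<2 * a}) f
      \<le> epowr (ennreal a * epowr (max_rearr f a) q) (1 / q)"
    unfolding Gamma_norm_def using assms by (intro epowr_mono) auto
  also have "\<dots> = ennreal (a powr (1 / q)) * max_rearr f a"
    using assms by (simp add: epowr_cmult epowr_epowr_inverse)
  finally show ?thesis .
qed

lemma Gamma_norm_indicator_ge:
  assumes "0 < a" "0 < q"
  shows "ennreal (a powr (1 / q) / 2) * max_rearr f a \<le> Gamma_norm q (indicator {a<..<2 * a}) f"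
proof -
  have "(\<integral>\<^sup>+ t. epowr (ennreal (1 / 2) * max_rearr f a) q * indicator {a<..<2 * a} t \<partial>lborel)
      \<le> (\<integral>\<^sup>+ t\<in>{0<..}. epowr (max_rearr f t) q * ennreal (indicator {a<..<2 * a} t) \<partial>lborel)"
  proof (intro nn_integral_mono)
    fix t
    have "epowr (ennreal (1 / 2) * max_rearr f a) q \<le> epowr (max_rearr f t) q"
      if "a < t" "t < 2 * a"
    proof (intro epowr_mono \<open>0 < q\<close>)
      have "ennreal (1 / 2) * max_rearr f a \<le> max_rearr f (2 * a)"
        by (rule max_rearr_double[OF \<open>0 < a\<close>])
      also have "\<dots> \<le> max_rearr f t"
        using that assms by (intro max_rearr_antimono) auto
      finally show "ennreal (1 / 2) * max_rearr f a \<le> max_rearr f t" .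
    qed
    then show "epowr (ennreal (1 / 2) * max_rearr f a) q * indicator {a<..<2 * a} t
        \<le> epowr (max_rearr f t) q * ennreal (indicator {a<..<2 * a} t) * indicator {0<..} t"
      using assms by (auto simp: indicator_def)
  qed
  then have "epowr (ennreal a * epowr (ennreal (1 / 2) * max_rearr f a) q) (1 / q)
      \<le> Gamma_norm q (indicator {a<..<2 * a}) f"
    unfolding Gamma_norm_def nn_integral_const_indicator_double[OF \<open>0 < a\<close>] using assms
    by (intro epowr_mono) (simp_all add: mult.commute)
  moreover have "ennreal (a powr (1 / q) / 2) = ennreal (a powr (1 / q)) * ennreal (1 / 2)"
    by (subst ennreal_mult[symmetric]) auto
  then have "epowr (ennreal a * epowr (ennreal (1 / 2) * max_rearr f a) q) (1 / q)
      = ennreal (a powr (1 / q) / 2) * max_rearr f a"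
    by (simp only: epowr_cmult[OF \<open>0 < a\<close>] epowr_epowr_inverse[OF \<open>0 < q\<close>] mult.assoc)
  ultimately show ?thesis
    by simp
qed

lemma min_ratio_powr_bounds:
  fixes a t r q :: real
  assumes "0 < a" "a < t" "t < 2 * a" "0 < r" "0 < q"
  shows "2 powr (- q) * min 1 (r / a) powr q \<le> (min t r / t) powr q"
    and "(min t r / t) powr q \<le> min 1 (r / a) powr q"
proof -
  have ratio: "min t r / t = min 1 (r / t)"
    using assms by (simp add: min_def field_simps)
  have "1 / 2 * min 1 (r / a) \<le> min 1 (r / t)"
    using assms by (auto simp: min_def field_simps)
  then have "(1 / 2 * min 1 (r / a)) powr q \<le> (min t r / t) powr q"
    unfolding ratio using assms by (intro powr_mono2) auto
  moreover have "(1 / 2 * min 1 (r / a)) powr q = 2 powr (- q) * min 1 (r / a) powr q"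
    using assms powr_mult[of "1 / 2" "min 1 (r / a)" q] powr_divide[of 1 2 q]
    by (simp add: powr_minus_divide)
  ultimately show "2 powr (- q) * min 1 (r / a) powr q \<le> (min t r / t) powr q"
    by simp
  have "min 1 (r / t) \<le> min 1 (r / a)"
    using assms by (auto simp: min_def field_simps)
  then show "(min t r / t) powr q \<le> min 1 (r / a) powr q"
    unfolding ratio using assms by (intro powr_mono2) auto
qed

lemma ball_gamma_indicator_bounds:
  assumes "0 < a" "0 < r" "0 < q"
  shows "ball_gamma q (indicator {a<..<2 * a}) r \<le> ennreal a * ennreal (min 1 (r / a) powr q)"
    and "ennreal (a * 2 powr (- q)) * ennreal (min 1 (r / a) powr q)
        \<le> ball_gamma q (indicator {a<..<2 * a}) r"
proof -
  have "ball_gamma q (indicator {a<..<2 * a}) r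
      = (\<integral>\<^sup>+ t. ennreal ((min t r / t) powr q) * indicator {a<..<2 * a} t \<partial>lborel)"
    unfolding ball_gamma_def using assms by (intro nn_integral_cong) (auto simp: indicator_def)
  moreover have "(\<integral>\<^sup>+ t. ennreal ((min t r / t) powr q) * indicator {a<..<2 * a} t \<partial>lborel)
      \<le> (\<integral>\<^sup>+ t. ennreal (min 1 (r / a) powr q) * indicator {a<..<2 * a} t \<partial>lborel)"
    using min_ratio_powr_bounds(2)[OF assms(1) _ _ assms(2,3)]
    by (intro nn_integral_mono) (auto simp: indicator_def ennreal_leI)
  moreover have
    "(\<integral>\<^sup>+ t. ennreal (2 powr (- q) * min 1 (r / a) powr q) * indicator {a<..<2 * a} t \<partial>lborel)
      \<le> (\<integral>\<^sup>+ t. ennreal ((min t r / t) powr q) * indicator {a<..<2 * a} t \<partial>lborel)"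
    using min_ratio_powr_bounds(1)[OF assms(1) _ _ assms(2,3)]
    by (intro nn_integral_mono) (auto simp: indicator_def ennreal_leI)
  ultimately show "ball_gamma q (indicator {a<..<2 * a}) r
      \<le> ennreal a * ennreal (min 1 (r / a) powr q)"
    and "ennreal (a * 2 powr (- q)) * ennreal (min 1 (r / a) powr q)
        \<le> ball_gamma q (indicator {a<..<2 * a}) r"
    unfolding nn_integral_const_indicator_double[OF assms(1)] using assms(1)
    by (simp_all add: ennreal_mult[symmetric] mult_ac)
qed

section \<open>Decreasing weights\<close>

locale finite_decreasing_weight =
  fixes w :: "real \<Rightarrow> real"
  assumes decreasing: "decreasing_weight w"
    and Wprim_finite: "\<And>t. 0 < t \<Longrightarrow> Wprim w t < \<infinity>"
begin

definition W :: "real \<Rightarrow> real" where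
  "W t = enn2real (Wprim w t)"

lemma is_weight: "is_weight w"
  using decreasing unfolding decreasing_weight_def by simp

lemma w_nonneg: "0 < t \<Longrightarrow> 0 \<le> w t"
  using is_weight unfolding is_weight_def by simp

lemma w_antimono: "0 < s \<Longrightarrow> s \<le> t \<Longrightarrow> w t \<le> w s"
  using decreasing unfolding decreasing_weight_def by simp

lemma measurable_w_indicator[measurable]:
  "(\<lambda>x. ennreal (w x) * indicator {0<..<t} x) \<in> borel_measurable borel"
  by (rule borel_measurable_weight_indicator[OF is_weight]) auto

lemma Wprim_eq_W: "Wprim w t = ennreal (W t)"
proof (cases "0 < t")
  case True
  then show ?thesis
    using Wprim_finite[of t] unfolding W_def by (simp add: less_top[symmetric])
qed (simp add: W_def Wprim_def)

lemma W_nonneg: "0 \<le> W t"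
  unfolding W_def by simp

lemma W_nonpos: "t \<le> 0 \<Longrightarrow> W t = 0"
  by (simp add: W_def Wprim_def)

lemma W_mono: "s \<le> t \<Longrightarrow> W s \<le> W t"
proof -
  assume "s \<le> t"
  then have "Wprim w s \<le> Wprim w t"
    unfolding Wprim_def by (intro nn_integral_mono) (auto simp: indicator_def)
  then show ?thesis
    unfolding Wprim_eq_W by (simp add: W_nonneg)
qed

lemma mult_w_le_W:
  assumes "0 < t"
  shows "t * w t \<le> W t"
proof -
  have "ennreal (t * w t) = (\<integral>\<^sup>+ x. ennreal (w t) * indicator {0<..<t} x \<partial>lborel)"
    using assms w_nonneg[OF assms]
    by (simp add: nn_integral_cmult_indicator ennreal_mult mult.commute)
  also have "\<dots> \<le> Wprim w t"
    unfolding Wprim_def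
    by (intro nn_integral_mono) (auto simp: indicator_def intro!: ennreal_leI w_antimono)
  finally show ?thesis
    unfolding Wprim_eq_W using W_nonneg by simp
qed

lemma W_le_add:
  assumes "0 < s" "s \<le> t"
  shows "W t \<le> W s + (t - s) * w s"
proof -
  have "Wprim w t
      \<le> (\<integral>\<^sup>+ x. ennreal (w x) * indicator {0<..<s} x + ennreal (w s) * indicator {s..<t} x \<partial>lborel)"
    unfolding Wprim_def using assms
    by (intro nn_integral_mono) (auto simp: indicator_def intro!: ennreal_leI w_antimono)
  also have "\<dots> = Wprim w s + ennreal ((t - s) * w s)"
    unfolding Wprim_def using assms w_nonneg[of s]
    by (subst nn_integral_add) (auto simp: nn_integral_cmult_indicator ennreal_mult mult.commute)
  also have "\<dots> = ennreal (W s + (t - s) * w s)"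
    using assms w_nonneg[of s] W_nonneg[of s] by (simp add: Wprim_eq_W)
  finally show ?thesis
    unfolding Wprim_eq_W using assms w_nonneg[of s] W_nonneg[of s]
    by (subst (asm) ennreal_le_iff) auto
qed

lemma W_over_id_antimono:
  assumes "0 < s" "s \<le> t"
  shows "s * W t \<le> t * W s"
proof -
  have "s * W t \<le> s * W s + (t - s) * (s * w s)"
    using mult_left_mono[OF W_le_add[OF assms], of s] assms by (simp add: algebra_simps)
  also have "\<dots> \<le> s * W s + (t - s) * W s"
    using mult_w_le_W[OF assms(1)] assms by (intro add_left_mono mult_left_mono) auto
  finally show ?thesis
    by (simp add: algebra_simps)
qed

lemma W_le_mult_bound:
  assumes "\<And>x. 0 < x \<Longrightarrow> w x \<le> B" "0 \<le> t"
  shows "W t \<le> B * t"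
proof -
  have "0 \<le> B"
    using assms(1)[of 1] w_nonneg[of 1] by simp
  have "Wprim w t \<le> (\<integral>\<^sup>+ x. ennreal B * indicator {0<..<t} x \<partial>lborel)"
    unfolding Wprim_def using assms(1)
    by (intro nn_integral_mono) (auto simp: indicator_def ennreal_leI)
  also have "\<dots> = ennreal (B * t)"
    using assms(2) \<open>0 \<le> B\<close> by (simp add: nn_integral_cmult_indicator ennreal_mult)
  finally show ?thesis
    unfolding Wprim_eq_W using \<open>0 \<le> B\<close> assms(2) by simp
qed

lemma nn_integral_w_eq_SUP_Wprim:
  "(\<integral>\<^sup>+ x\<in>{0<..}. ennreal (w x) \<partial>lborel) = (SUP n. Wprim w (real n))"
proof -
  have pointwise:
    "(SUP n. ennreal (w x) * indicator {0<..<real n} x) = ennreal (w x) * indicator {0<..} x" for x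
  proof (rule antisym)
    show "(SUP n. ennreal (w x) * indicator {0<..<real n} x) \<le> ennreal (w x) * indicator {0<..} x"
      by (rule SUP_least) (auto simp: indicator_def)
    obtain n where "x < real n"
      using reals_Archimedean2 by blast
    then have "ennreal (w x) * indicator {0<..} x = ennreal (w x) * indicator {0<..<real n} x"
      by (auto simp: indicator_def)
    also have "\<dots> \<le> (SUP n. ennreal (w x) * indicator {0<..<real n} x)"
      by (rule SUP_upper) simp
    finally show
      "ennreal (w x) * indicator {0<..} x \<le> (SUP n. ennreal (w x) * indicator {0<..<real n} x)" .
  qed
  have "incseq (\<lambda>n x. ennreal (w x) * indicator {0<..<real n} x)"
    by (intro incseq_SucI le_funI mult_left_mono) (auto simp: indicator_def)
  then have "(SUP n. Wprim w (real n))
      = (\<integral>\<^sup>+ x. (SUP n. ennreal (w x) * indicator {0<..<real n} x) \<partial>lborel)"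
    unfolding Wprim_def by (intro nn_integral_monotone_convergence_SUP[symmetric]) simp_all
  then show ?thesis
    unfolding pointwise by simp
qed

lemma nn_integral_w_finite_iff_W_bounded:
  "(\<integral>\<^sup>+ x\<in>{0<..}. ennreal (w x) \<partial>lborel) < \<infinity> \<longleftrightarrow> (\<exists>A. \<forall>t. W t \<le> A)"
  unfolding nn_integral_w_eq_SUP_Wprim Wprim_eq_W
proof
  assume "(SUP n. ennreal (W (real n))) < \<infinity>"
  then obtain A where A: "(SUP n. ennreal (W (real n))) = ennreal A" "0 \<le> A"
    by (cases "SUP n. ennreal (W (real n))") auto
  have "W t \<le> A" for t
  proof -
    have "ennreal (W (real (nat \<lceil>t\<rceil>))) \<le> ennreal A"
      unfolding A(1)[symmetric] by (rule SUP_upper) simp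
    then have "W (real (nat \<lceil>t\<rceil>)) \<le> A"
      using A(2) by simp
    then show ?thesis
      using W_mono[of t "real (nat \<lceil>t\<rceil>)"] by linarith
  qed
  then show "\<exists>A. \<forall>t. W t \<le> A"
    by blast
next
  assume "\<exists>A. \<forall>t. W t \<le> A"
  then obtain A where "\<And>t. W t \<le> A"
    by blast
  then have "(SUP n. ennreal (W (real n))) \<le> ennreal A"
    by (intro SUP_least ennreal_leI) auto
  then have "(SUP n. ennreal (W (real n))) < top"
    using ennreal_less_top[of A] by (rule le_less_trans)
  then show "(SUP n. ennreal (W (real n))) < \<infinity>"
    by simp
qed

lemma set_integrable_iff_W_bounded: "set_integrable lborel {0<..} w \<longleftrightarrow> (\<exists>A. \<forall>t. W t \<le> A)"
proof -
  have "(\<lambda>x. indicator {0<..} x *\<^sub>R w x) \<in> borel_measurable lborel"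
    using is_weight unfolding is_weight_def set_borel_measurable_def by simp
  moreover have "(\<integral>\<^sup>+ x. ennreal (norm (indicator {0<..} x *\<^sub>R w x)) \<partial>lborel)
      = (\<integral>\<^sup>+ x\<in>{0<..}. ennreal (w x) \<partial>lborel)"
    using w_nonneg by (intro nn_integral_cong) (auto simp: indicator_def)
  ultimately show ?thesis
    unfolding set_integrable_def integrable_iff_bounded
      nn_integral_w_finite_iff_W_bounded[symmetric]
    by simp
qed

lemma tendsto_0_if_set_integrable:
  assumes "set_integrable lborel {0<..} w"
  shows "(w \<longlongrightarrow> 0) at_top"
proof -
  obtain A where A: "\<And>t. W t \<le> A"
    using assms unfolding set_integrable_iff_W_bounded by blast
  have "w t \<le> A / t" if "0 < t" for t
    using mult_w_le_W[OF that] A[of t] that by (simp add: pos_le_divide_eq mult.commute)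
  with eventually_gt_at_top[of 0] have upper: "\<forall>\<^sub>F t in at_top. w t \<le> A / t"
    by (rule eventually_mono)
  have lower: "\<forall>\<^sub>F t in at_top. 0 \<le> w t"
    using eventually_gt_at_top[of 0] by (rule eventually_mono) (simp add: w_nonneg)
  have "((\<lambda>t. A / t) \<longlongrightarrow> 0) at_top"
    using tendsto_divide_0[OF tendsto_const filterlim_at_top_imp_at_infinity[OF filterlim_ident]] .
  with lower upper show ?thesis
    by (rule tendsto_sandwich[OF _ _ tendsto_const])
qed

lemma W_small_near_0:
  assumes "0 < e"
  shows "\<exists>d>0. \<forall>t. 0 < t \<longrightarrow> t < d \<longrightarrow> W t < e"
proof -
  define f where "f n x = ennreal (w x) * indicator {0<..<1 / real (Suc n)} x" for n x
  have "1 / real (Suc (Suc n)) \<le> 1 / real (Suc n)" for n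
    by (rule frac_le) auto
  then have "decseq f"
    unfolding f_def
    by (intro decseq_SucI le_funI mult_left_mono) (auto simp: indicator_def intro: less_le_trans)
  moreover have "f n \<in> borel_measurable lborel" for n
    unfolding f_def[abs_def] by simp
  moreover have "(\<integral>\<^sup>+ x. f 0 x \<partial>lborel) < \<infinity>"
    using Wprim_finite[of 1] by (simp add: f_def Wprim_def)
  moreover have pointwise: "(INF n. f n x) = 0" for x
  proof (cases "0 < x")
    case True
    obtain n where "inverse (real (Suc n)) < x"
      using reals_Archimedean[OF True] by blast
    then have "f n x = 0"
      by (simp add: f_def indicator_def inverse_eq_divide)
    then have "(INF n. f n x) \<le> 0"
      by (metis INF_lower UNIV_I)
    then show ?thesis
      by simp
  qed (simp add: f_def)
  ultimately have "(INF n. (\<integral>\<^sup>+ x. f n x \<partial>lborel)) = 0"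
    using nn_integral_monotone_convergence_INF_decseq[of f lborel 0] by simp
  then obtain n where "(\<integral>\<^sup>+ x. f n x \<partial>lborel) < ennreal e"
    using assms by (metis INF_less_iff ennreal_0 ennreal_lessI)
  then have "W (1 / real (Suc n)) < e"
    unfolding f_def Wprim_def[symmetric] Wprim_eq_W using W_nonneg ennreal_less_iff by blast
  then have "W t < e" if "t < 1 / real (Suc n)" for t
    using W_mono[of t "1 / real (Suc n)"] that by linarith
  then show ?thesis
    by (intro exI[of _ "1 / real (Suc n)"]) auto
qed

lemma Lambda1_norm_ge:
  assumes "0 < a"
  shows "ennreal (a * w a) * max_rearr f a \<le> Lambda1_norm w f"
proof -
  have "ennreal (a * w a) * max_rearr f a = ennreal (w a) * rearr_integral f a"
    unfolding mult_max_rearr[OF assms, symmetric] using assms w_nonneg[OF assms]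
    by (simp add: ennreal_mult mult_ac)
  also have "\<dots> = (\<integral>\<^sup>+ t. ennreal (w a) * (rearr f t * indicator {0<..<a} t) \<partial>lborel)"
    unfolding rearr_integral_def by (subst nn_integral_cmult) auto
  also have "\<dots> \<le> Lambda1_norm w f"
    unfolding Lambda1_norm_def
    by (intro nn_integral_mono)
      (auto simp: indicator_def mult.commute intro!: mult_left_mono ennreal_leI w_antimono)
  finally show ?thesis .
qed

lemma Gamma1inf_norm_ge:
  assumes "0 < a"
  shows "ennreal (a * w a) * max_rearr f a \<le> Gamma1inf_norm w f"
proof -
  have "ennreal (a * w a) * max_rearr f a \<le> max_rearr f a * Wprim w a"
    unfolding Wprim_eq_W using mult_w_le_W[OF assms]
    by (simp add: mult.commute mult_left_mono ennreal_leI)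
  also have "\<dots> \<le> Gamma1inf_norm w f"
    unfolding Gamma1inf_norm_def using assms by (intro SUP_upper) auto
  finally show ?thesis .
qed

lemma W_ge_min:
  assumes "0 < a" "0 < r"
  shows "a * w a * min 1 (r / a) \<le> W r"
proof (cases "r \<le> a")
  case True
  have "a * w a * min 1 (r / a) = r * w a"
    using True assms by (simp add: min_def)
  also have "\<dots> \<le> r * w r"
    using True assms by (intro mult_left_mono w_antimono) auto
  also have "\<dots> \<le> W r"
    by (rule mult_w_le_W[OF assms(2)])
  finally show ?thesis .
next
  case False
  then have "a * w a * min 1 (r / a) = a * w a"
    using assms by (simp add: min_def)
  also have "\<dots> \<le> W a"
    by (rule mult_w_le_W[OF assms(1)])
  also have "\<dots> \<le> W r"
    using False by (intro W_mono) simp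
  finally show ?thesis .
qed

lemma ball_gamma_le_if_Gamma_norm_le:
  assumes "\<And>f::'a::euclidean_space \<Rightarrow> real. f \<in> borel_measurable lebesgue \<Longrightarrow>
      Gamma_norm q v f \<le> ennreal C * Lambda1_norm w f"
    and "0 < q" "0 \<le> C" "0 < s"
  shows "ball_gamma q v s \<le> ennreal ((C * W s) powr q)"
proof -
  have "Gamma_norm q v (ball_indicator s :: 'a \<Rightarrow> real)
      \<le> ennreal C * Lambda1_norm w (ball_indicator s :: 'a \<Rightarrow> real)"
    by (rule assms(1)) (simp add: borel_measurable_radial_step)
  then have "epowr (ball_gamma q v s) (1 / q) \<le> ennreal C * ennreal (W s)"
    unfolding Gamma_norm_ball_indicator[OF assms(4)]
      Lambda1_norm_ball_indicator[OF is_weight assms(4)]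
      Wprim_eq_W .
  then show ?thesis
    using assms(2,3) W_nonneg by (intro le_powr_if_epowr_le) (auto simp: ennreal_mult)
qed

lemma ball_gamma_ge_if_Lambda1_norm_le:
  assumes "\<And>f::'a::euclidean_space \<Rightarrow> real. f \<in> borel_measurable lebesgue \<Longrightarrow>
      Lambda1_norm w f \<le> ennreal C * Gamma_norm q v f"
    and "0 < q" "0 < C" "0 < s"
  shows "ennreal ((W s / C) powr q) \<le> ball_gamma q v s"
proof -
  have "Lambda1_norm w (ball_indicator s :: 'a \<Rightarrow> real)
      \<le> ennreal C * Gamma_norm q v (ball_indicator s :: 'a \<Rightarrow> real)"
    by (rule assms(1)) (simp add: borel_measurable_radial_step)
  then have "ennreal (W s) \<le> ennreal C * epowr (ball_gamma q v s) (1 / q)"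
    unfolding Gamma_norm_ball_indicator[OF assms(4)]
      Lambda1_norm_ball_indicator[OF is_weight assms(4)]
      Wprim_eq_W .
  then have "ennreal (1 / C) * ennreal (W s) \<le> epowr (ball_gamma q v s) (1 / q)"
    using mult_left_mono[of _ _ "ennreal (1 / C)"] assms(3)
    by (fastforce simp: mult.assoc[symmetric] ennreal_mult[symmetric])
  then have "epowr (ennreal (W s / C)) q \<le> epowr (epowr (ball_gamma q v s) (1 / q)) q"
    using assms(3) W_nonneg by (intro epowr_mono assms(2)) (simp add: ennreal_mult[symmetric])
  also have "\<dots> = ball_gamma q v s"
    using epowr_epowr_inverse[of "1 / q" "ball_gamma q v s"] assms(2) by simp
  finally show ?thesis
    using assms(3) W_nonneg by (simp add: epowr_ennreal)
qed

end

section \<open>Bounded integrable weights\<close>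

locale bounded_integrable_weight = finite_decreasing_weight +
  fixes B A :: real
  assumes w_le_B: "\<And>x. 0 < x \<Longrightarrow> w x \<le> B"
    and W_le_A: "\<And>t. W t \<le> A"
begin

lemma B_nonneg: "0 \<le> B"
  using w_le_B[of 1] w_nonneg[of 1] by simp

lemma A_nonneg: "0 \<le> A"
  using W_le_A[of 0] W_nonneg[of 0] by simp

lemma nn_integral_w_le_A: "(\<integral>\<^sup>+ x\<in>{0<..}. ennreal (w x) \<partial>lborel) \<le> ennreal A"
  unfolding nn_integral_w_eq_SUP_Wprim Wprim_eq_W by (intro SUP_least ennreal_leI W_le_A)

lemma rearr_mult_w_le_split:
  "rearr f t * ennreal (w t) * indicator {0<..} t
    \<le> ennreal B * (rearr f t * indicator {0<..<a} t)
      + rearr f a * (ennreal (w t) * indicator {0<..} t)"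
proof (cases "t < a")
  case True
  have "rearr f t * ennreal (w t) \<le> rearr f t * ennreal B" if "0 < t"
    using w_le_B[OF that] by (intro mult_left_mono ennreal_leI) auto
  then have "rearr f t * ennreal (w t) * indicator {0<..} t
      \<le> ennreal B * (rearr f t * indicator {0<..<a} t)"
    using True by (auto simp: indicator_def mult.commute)
  then show ?thesis
    by (simp add: add_increasing2)
next
  case False
  then have "rearr f t \<le> rearr f a"
    by (intro antimonoD[OF rearr_antimono]) simp
  then have "rearr f t * ennreal (w t) * indicator {0<..} t
      \<le> rearr f a * (ennreal (w t) * indicator {0<..} t)"
    by (simp add: mult.assoc mult_right_mono)
  then show ?thesis
    by (simp add: add_increasing)
qed

lemma Lambda1_norm_le:
  assumes "0 < a"
  shows "Lambda1_norm w f \<le> ennreal (B * a + A) * max_rearr f a"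
proof -
  have "Lambda1_norm w f \<le> (\<integral>\<^sup>+ t. ennreal B * (rearr f t * indicator {0<..<a} t)
      + rearr f a * (ennreal (w t) * indicator {0<..} t) \<partial>lborel)"
    unfolding Lambda1_norm_def by (intro nn_integral_mono rearr_mult_w_le_split)
  also have "\<dots> = ennreal B * rearr_integral f a
      + rearr f a * (\<integral>\<^sup>+ t\<in>{0<..}. ennreal (w t) \<partial>lborel)"
    unfolding rearr_integral_def using borel_measurable_weight_indicator[OF is_weight, of "{0<..}"]
    by (subst nn_integral_add) (auto simp: nn_integral_cmult)
  also have "\<dots> \<le> ennreal B * (ennreal a * max_rearr f a) + max_rearr f a * ennreal A"
    unfolding mult_max_rearr[OF assms]
    by (intro add_mono mult_mono rearr_le_max_rearr assms nn_integral_w_le_A) auto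
  also have "\<dots> = ennreal (B * a + A) * max_rearr f a"
    using assms B_nonneg A_nonneg by (simp add: ennreal_mult algebra_simps)
  finally show ?thesis .
qed

lemma Gamma1inf_norm_le:
  assumes "0 < a"
  shows "Gamma1inf_norm w f \<le> ennreal (B * a + A) * max_rearr f a"
  unfolding Gamma1inf_norm_def
proof (rule SUP_least)
  fix t :: real
  assume "t \<in> {0<..}"
  then have "0 < t"
    by simp
  show "max_rearr f t * Wprim w t \<le> ennreal (B * a + A) * max_rearr f a"
  proof (cases "t \<le> a")
    case True
    have "max_rearr f t * Wprim w t \<le> max_rearr f t * ennreal (B * t)"
      unfolding Wprim_eq_W using W_le_mult_bound[OF w_le_B] \<open>0 < t\<close>
      by (intro mult_left_mono ennreal_leI) auto
    also have "\<dots> = ennreal B * rearr_integral f t"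
      unfolding mult_max_rearr[OF \<open>0 < t\<close>, symmetric] using \<open>0 < t\<close> B_nonneg
      by (simp add: ennreal_mult mult_ac)
    also have "\<dots> \<le> ennreal B * rearr_integral f a"
      using True by (intro mult_left_mono rearr_integral_mono) auto
    also have "\<dots> = ennreal (B * a) * max_rearr f a"
      unfolding mult_max_rearr[OF assms, symmetric] using assms B_nonneg
      by (simp add: ennreal_mult mult_ac)
    also have "\<dots> \<le> ennreal (B * a + A) * max_rearr f a"
      using A_nonneg by (intro mult_right_mono ennreal_leI) auto
    finally show ?thesis .
  next
    case False
    then have "max_rearr f t * Wprim w t \<le> max_rearr f a * ennreal A"
      unfolding Wprim_eq_W using assms W_le_A
      by (intro mult_mono max_rearr_antimono ennreal_leI) auto
    also have "\<dots> \<le> ennreal (B * a + A) * max_rearr f a"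
      using assms B_nonneg by (subst mult.commute) (intro mult_right_mono ennreal_leI, auto)
    finally show ?thesis .
  qed
qed

lemma W_le_min:
  assumes "0 < a" "0 < r"
  shows "W r \<le> max (B * a) A * min 1 (r / a)"
proof (cases "r \<le> a")
  case True
  have "W r \<le> B * r"
    using W_le_mult_bound[OF w_le_B] assms by simp
  also have "\<dots> = B * a * min 1 (r / a)"
    using True assms by (simp add: min_def)
  also have "\<dots> \<le> max (B * a) A * min 1 (r / a)"
    using assms by (intro mult_right_mono) auto
  finally show ?thesis .
next
  case False
  then have "min 1 (r / a) = 1"
    using assms by simp
  then show ?thesis
    using W_le_A[of r] by simp
qed

lemma equiv_on_pos_ball_gamma_indicator:
  assumes "0 < a" "0 < w a" "0 < q"
  shows "equiv_on_pos (\<lambda>r. epowr (Wprim w r) q) (ball_gamma q (indicator {a<..<2 * a}))"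
proof -
  define D where "D = max (B * a) A"
  have "a * w a \<le> D"
    using w_le_B[OF assms(1)] assms(1) by (simp add: D_def mult.commute max.coboundedI1)
  then have "0 < D"
    using assms by (meson mult_pos_pos less_le_trans)
  have W_bounds: "epowr (Wprim w r) q \<le> ennreal (D powr q) * ennreal (min 1 (r / a) powr q)
      \<and> ennreal ((a * w a) powr q) * ennreal (min 1 (r / a) powr q) \<le> epowr (Wprim w r) q"
    if "0 < r" for r
  proof -
    have "min 1 (r / a) \<ge> 0"
      using assms that by simp
    have "W r powr q \<le> (D * min 1 (r / a)) powr q"
      using W_le_min[OF assms(1) that] assms W_nonneg by (intro powr_mono2) (auto simp: D_def)
    moreover have "(a * w a * min 1 (r / a)) powr q \<le> W r powr q"
      using W_ge_min[OF assms(1) that] assms that by (intro powr_mono2) auto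
    ultimately show ?thesis
      unfolding Wprim_eq_W epowr_ennreal[OF W_nonneg] using \<open>0 < D\<close> \<open>0 \<le> min 1 (r / a)\<close> assms
      by (simp add: powr_mult ennreal_mult[symmetric])
  qed
  have "\<exists>C>0. \<forall>r. 0 < r \<longrightarrow> epowr (Wprim w r) q \<le> ennreal C * ball_gamma q (indicator {a<..<2 * a}) r
      \<and> ball_gamma q (indicator {a<..<2 * a}) r \<le> ennreal C * epowr (Wprim w r) q"
    using assms \<open>0 < D\<close> W_bounds ball_gamma_indicator_bounds[OF assms(1) _ assms(3)]
    by (intro comparable_via_common[where X="\<lambda>r. ennreal (min 1 (r / a) powr q)"
          and c="D powr q" and c'="(a * w a) powr q" and d=a and d'="a * 2 powr (- q)"]) auto
  then show ?thesis
    unfolding equiv_on_pos_def .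
qed

lemma space_eq_Gamma1inf_norm:
  assumes "0 < a" "0 < w a"
  shows "space_eq (Lambda1_norm w :: ('a::euclidean_space \<Rightarrow> real) \<Rightarrow> ennreal) (Gamma1inf_norm w)"
proof -
  have "a * w a \<le> B * a"
    using w_le_B[OF assms(1)] assms(1) by (simp add: mult.commute)
  then have "0 < B * a + A"
    using assms A_nonneg by (meson add_nonneg_pos add_pos_nonneg mult_pos_pos less_le_trans)
  then show ?thesis
    unfolding space_eq_def Ball_def using assms
    by (intro comparable_via_common[where X="\<lambda>f. max_rearr f a"
          and c="B * a + A" and c'="a * w a" and d="B * a + A" and d'="a * w a"])
      (auto intro: Lambda1_norm_le Lambda1_norm_ge Gamma1inf_norm_le Gamma1inf_norm_ge)
qed

lemma space_eq_Gamma_norm_indicator: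
  assumes "0 < a" "0 < w a" "0 < q"
  shows "space_eq (Lambda1_norm w :: ('a::euclidean_space \<Rightarrow> real) \<Rightarrow> ennreal)
    (Gamma_norm q (indicator {a<..<2 * a}))"
proof -
  have "a * w a \<le> B * a"
    using w_le_B[OF assms(1)] assms(1) by (simp add: mult.commute)
  then have "0 < B * a + A"
    using assms A_nonneg by (meson add_nonneg_pos add_pos_nonneg mult_pos_pos less_le_trans)
  then show ?thesis
    unfolding space_eq_def Ball_def using assms
    by (intro comparable_via_common[where X="\<lambda>f. max_rearr f a"
          and c="B * a + A" and c'="a * w a" and d="a powr (1 / q)" and d'="a powr (1 / q) / 2"])
      (auto intro: Lambda1_norm_le Lambda1_norm_ge Gamma_norm_indicator_le Gamma_norm_indicator_ge)
qed

end

context finite_decreasing_weight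
begin

lemma Wprim_Lambda1_norm_eq_0_if_not_pos:
  fixes f :: "'a::euclidean_space \<Rightarrow> real"
  assumes "\<not> (\<exists>a>0. 0 < w a)"
  shows "Wprim w r = 0" and "Lambda1_norm w f = 0"
proof -
  have "w t = 0" if "0 < t" for t
    using w_nonneg[OF that] that assms by force
  then show "Wprim w r = 0" "Lambda1_norm w f = 0"
    unfolding Wprim_def Lambda1_norm_def
    by (subst nn_integral_cong[where v="\<lambda>_. 0"], force simp: indicator_def, simp)+
qed

lemma Gamma_representation_if_bounded_integrable:
  assumes "\<exists>B. \<forall>x>0. w x \<le> B" "set_integrable lborel {0<..} w" "0 < q"
  shows "\<exists>wq. is_weight wq \<and>
    equiv_on_pos (\<lambda>r. epowr (Wprim w r) q)
      (\<lambda>r. (\<integral>\<^sup>+ x\<in>{0<..<r}. ennreal (wq x) \<partial>lborel)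
        + ennreal (r powr q) * (\<integral>\<^sup>+ x\<in>{r<..}. ennreal (wq x * x powr (-q)) \<partial>lborel)) \<and>
    space_eq (Lambda1_norm w :: ('a::euclidean_space \<Rightarrow> real) \<Rightarrow> ennreal) (Gamma_norm q wq)"
proof (cases "\<exists>a>0. 0 < w a")
  case True
  then obtain a where "0 < a" "0 < w a"
    by blast
  obtain B A where "\<And>x. 0 < x \<Longrightarrow> w x \<le> B" "\<And>t. W t \<le> A"
    using assms(1,2) unfolding set_integrable_iff_W_bounded by blast
  then interpret bounded_integrable_weight w B A
    by unfold_locales
  have "equiv_on_pos (\<lambda>r. epowr (Wprim w r) q)
      (\<lambda>r. (\<integral>\<^sup>+ x\<in>{0<..<r}. ennreal (indicator {a<..<2 * a} x) \<partial>lborel)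
        + ennreal (r powr q)
          * (\<integral>\<^sup>+ x\<in>{r<..}. ennreal (indicator {a<..<2 * a} x * x powr (-q)) \<partial>lborel))"
    using equiv_on_pos_ball_gamma_indicator[OF \<open>0 < a\<close> \<open>0 < w a\<close> assms(3)]
    by (rule equiv_on_pos_cong_right) (rule ball_gamma_split[OF is_weight_indicator])
  then show ?thesis
    using is_weight_indicator space_eq_Gamma_norm_indicator[OF \<open>0 < a\<close> \<open>0 < w a\<close> assms(3)] by blast
next
  case False
  then show ?thesis
    unfolding equiv_on_pos_def space_eq_def Gamma_norm_def
    by (intro exI[of _ "\<lambda>_. 0"] conjI exI[of _ 1])
      (auto simp: Wprim_Lambda1_norm_eq_0_if_not_pos[OF False] is_weight_def
        set_borel_measurable_def set_integrable_def epowr_def)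
qed

lemma space_eq_Gamma1inf_norm_if_bounded_integrable:
  assumes "\<exists>B. \<forall>x>0. w x \<le> B" "set_integrable lborel {0<..} w"
  shows "space_eq (Lambda1_norm w :: ('a::euclidean_space \<Rightarrow> real) \<Rightarrow> ennreal) (Gamma1inf_norm w)"
proof (cases "\<exists>a>0. 0 < w a")
  case True
  then obtain a where "0 < a" "0 < w a"
    by blast
  obtain B A where "\<And>x. 0 < x \<Longrightarrow> w x \<le> B" "\<And>t. W t \<le> A"
    using assms unfolding set_integrable_iff_W_bounded by blast
  then interpret bounded_integrable_weight w B A
    by unfold_locales
  show ?thesis
    by (rule space_eq_Gamma1inf_norm[OF \<open>0 < a\<close> \<open>0 < w a\<close>])
next
  case False
  then show ?thesis
    unfolding space_eq_def Gamma1inf_norm_def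
    by (intro exI[of _ 1]) (simp add: Wprim_Lambda1_norm_eq_0_if_not_pos[OF False])
qed

end

section \<open>Lacunary sequences\<close>

context finite_decreasing_weight
begin

text \<open>For the test functions below, \<open>t f\<^sup>*\<^sup>*(t)\<close> is the sum of the terms \<open>min t (s k) / W (s k)\<close>,
  each the minimum of \<open>t / W (s k)\<close> and \<open>s k / W (s k)\<close>; lacunarity makes these two sequences
  geometric in opposite directions.\<close>
definition lacunary :: "(nat \<Rightarrow> real) \<Rightarrow> bool" where
  "lacunary s \<longleftrightarrow> (\<forall>k. 0 < s k \<and> 0 < W (s k)) \<and>
     ((\<forall>k. 2 * W (s k) \<le> W (s (Suc k)) \<and> 2 * (s k / W (s k)) \<le> s (Suc k) / W (s (Suc k))) \<or>
      (\<forall>k. 2 * W (s (Suc k)) \<le> W (s k) \<and> 2 * (s (Suc k) / W (s (Suc k))) \<le> s k / W (s k)))"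

lemma lacunary_pos:
  assumes "lacunary s"
  shows "0 < s k" and "0 < W (s k)"
  using assms unfolding lacunary_def by blast+

lemma lacunary_sum_le:
  assumes "lacunary s" "0 < t" "0 < K"
  shows "\<exists>j<K. (\<Sum>k<K. min t (s k) / W (s k)) \<le> 4 * (min t (s j) / W (s j))"
proof -
  define u where "u k = t / W (s k)" for k
  define v where "v k = s k / W (s k)" for k
  have pos: "0 < s k" "0 < W (s k)" for k
    using lacunary_pos[OF assms(1)] by auto
  have u_nonneg: "0 \<le> u k" and v_nonneg: "0 \<le> v k" for k
    using pos[of k] assms(2) by (simp_all add: u_def v_def)
  have min_eq: "min t (s k) / W (s k) = min (u k) (v k)" for k
    using pos[of k] by (simp add: u_def v_def min_divide_distrib_right)
  consider "\<forall>k. 2 * W (s k) \<le> W (s (Suc k)) \<and> 2 * v k \<le> v (Suc k)"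
    | "\<forall>k. 2 * W (s (Suc k)) \<le> W (s k) \<and> 2 * v (Suc k) \<le> v k"
    using assms(1) unfolding lacunary_def v_def by blast
  then have "\<exists>j<K. (\<Sum>k<K. min (u k) (v k)) \<le> 4 * min (u j) (v j)"
  proof cases
    case 1
    have "2 * u (Suc k) \<le> u k" for k
      using 1 pos assms(2) by (simp add: u_def field_simps)
    then show ?thesis
      using 1 by (intro sum_min_opposite_geometric u_nonneg v_nonneg assms(3)) auto
  next
    case 2
    have "2 * u k \<le> u (Suc k)" for k
      using 2 pos assms(2) by (simp add: u_def field_simps)
    then have "\<exists>j<K. (\<Sum>k<K. min (v k) (u k)) \<le> 4 * min (v j) (u j)"
      using 2 by (intro sum_min_opposite_geometric u_nonneg v_nonneg assms(3)) auto
    then show ?thesis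
      by (simp add: min.commute)
  qed
  then show ?thesis
    unfolding min_eq .
qed

lemma lacunary_sum_powr_le:
  assumes "lacunary s" "0 < t" "0 < K" "0 < q"
  shows "((\<Sum>k<K. min t (s k) / W (s k)) / t) powr q
    \<le> (\<Sum>k<K. (4 / W (s k)) powr q * (min t (s k) / t) powr q)"
proof -
  obtain j where "j < K" and sum_le: "(\<Sum>k<K. min t (s k) / W (s k)) \<le> 4 * (min t (s j) / W (s j))"
    using lacunary_sum_le[OF assms(1-3)] by blast
  have nonneg: "0 \<le> min t (s k) / W (s k)" for k
    using lacunary_pos[OF assms(1)] assms(2) by (simp add: less_imp_le)
  have "0 \<le> (\<Sum>k<K. min t (s k) / W (s k))"
    by (rule sum_nonneg) (rule nonneg)
  then have "0 \<le> (\<Sum>k<K. min t (s k) / W (s k)) / t"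
    using assms(2) by simp
  then have "((\<Sum>k<K. min t (s k) / W (s k)) / t) powr q \<le> (4 * (min t (s j) / W (s j)) / t) powr q"
    using sum_le assms(2,4) by (intro powr_mono2 divide_right_mono) auto
  also have "\<dots> = (4 / W (s j)) powr q * (min t (s j) / t) powr q"
    using lacunary_pos[OF assms(1)] assms(2) by (simp add: powr_mult[symmetric] less_imp_le)
  also have "\<dots> \<le> (\<Sum>k<K. (4 / W (s k)) powr q * (min t (s k) / t) powr q)"
    using \<open>j < K\<close> by (intro member_le_sum) auto
  finally show ?thesis .
qed

lemma min_div_W_mult_W_le:
  assumes "0 < s" "0 < W s" "0 < t"
  shows "min t s / W s * W t \<le> t"
proof (cases "t \<le> s")
  case True
  then show ?thesis
    using W_mono[OF True] assms by (simp add: min_def field_simps)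
next
  case False
  then show ?thesis
    using W_over_id_antimono[OF assms(1), of t] assms by (simp add: min_def field_simps)
qed

lemma lacunary_step_down:
  assumes "\<not> (\<exists>B. \<forall>x>0. w x \<le> B)" "0 < x" "0 < W x"
  shows "\<exists>y. 0 < y \<and> 0 < W y \<and> 2 * W y \<le> W x \<and> 2 * (y / W y) \<le> x / W x"
proof -
  obtain d where "0 < d" and small: "\<And>t. 0 < t \<Longrightarrow> t < d \<Longrightarrow> W t < W x / 2"
    using W_small_near_0[of "W x / 2"] assms(3) by auto
  obtain y1 where "0 < y1" "2 * W x / x < w y1"
    using assms(1) by (meson not_le)
  define y where "y = min y1 (d / 2)"
  have "0 < y" "y < d" "y \<le> y1"
    using \<open>0 < y1\<close> \<open>0 < d\<close> by (auto simp: y_def)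
  then have "2 * W x / x < w y"
    using w_antimono[of y y1] \<open>2 * W x / x < w y1\<close> by linarith
  then have "y * (2 * W x / x) < W y"
    using mult_w_le_W[OF \<open>0 < y\<close>] \<open>0 < y\<close> by (smt (verit) mult_strict_left_mono)
  then have "2 * W x / x < W y / y"
    using \<open>0 < y\<close> by (simp add: field_simps)
  moreover have "0 < W y"
    using \<open>2 * W x / x < w y\<close> mult_w_le_W[OF \<open>0 < y\<close>] \<open>0 < y\<close> assms(2,3)
    by (smt (verit) divide_pos_pos mult_pos_pos)
  ultimately have "2 * (y / W y) \<le> x / W x"
    using assms(2,3) \<open>0 < y\<close> by (simp add: field_simps)
  moreover have "2 * W y \<le> W x"
    using small[OF \<open>0 < y\<close> \<open>y < d\<close>] by simp
  ultimately show ?thesis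
    using \<open>0 < y\<close> \<open>0 < W y\<close> by blast
qed

lemma ex_lacunary_if_unbounded:
  assumes "\<not> (\<exists>B. \<forall>x>0. w x \<le> B)"
  shows "\<exists>s. lacunary s"
proof -
  obtain x0 where "0 < x0" "0 < w x0"
    using assms by (meson not_le)
  then have "0 < W x0"
    using mult_w_le_W[of x0] by (smt (verit) mult_pos_pos)
  have "\<exists>s. \<forall>n. (0 < s n \<and> 0 < W (s n)) \<and>
      2 * W (s (Suc n)) \<le> W (s n) \<and> 2 * (s (Suc n) / W (s (Suc n))) \<le> s n / W (s n)"
    using \<open>0 < x0\<close> \<open>0 < W x0\<close> lacunary_step_down[OF assms] by (intro dependent_nat_choice) auto
  then show ?thesis
    unfolding lacunary_def by blast
qed

lemma W_over_id_small_at_top: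
  assumes "\<And>e. 0 < e \<Longrightarrow> \<exists>T>0. w T < e" "0 < e"
  shows "\<exists>Y>0. \<forall>y\<ge>Y. W y / y \<le> e"
proof -
  obtain T where "0 < T" "w T < e / 2"
    using assms by (meson half_gt_zero)
  define Y where "Y = max T (2 * W T / e + 1)"
  have "0 < Y" "T \<le> Y" "2 * W T / e < Y"
    using \<open>0 < T\<close> by (auto simp: Y_def)
  have "W y / y \<le> e" if "Y \<le> y" for y
  proof -
    have "0 < y" "T \<le> y"
      using that \<open>0 < Y\<close> \<open>T \<le> Y\<close> by auto
    have "W y \<le> W T + (y - T) * w T"
      by (rule W_le_add[OF \<open>0 < T\<close> \<open>T \<le> y\<close>])
    also have "\<dots> \<le> W T + y * (e / 2)"
      using \<open>w T < e / 2\<close> w_nonneg[OF \<open>0 < T\<close>] \<open>0 < T\<close> \<open>T \<le> y\<close>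
      by (intro add_left_mono) (smt (verit) mult_left_mono mult_right_mono)
    also have "W T \<le> y * (e / 2)"
    proof -
      have "2 * W T < Y * e"
        using \<open>2 * W T / e < Y\<close> assms(2) by (simp add: field_simps)
      moreover have "Y * e \<le> y * e"
        using that assms(2) by (simp add: mult_right_mono)
      ultimately show ?thesis
        by simp
    qed
    finally show ?thesis
      using \<open>0 < y\<close> by (simp add: field_simps)
  qed
  then show ?thesis
    using \<open>0 < Y\<close> by blast
qed

lemma lacunary_step_up:
  assumes "\<not> (\<exists>A. \<forall>t. W t \<le> A)" "\<And>e. 0 < e \<Longrightarrow> \<exists>T>0. w T < e" "0 < x" "0 < W x"
  shows "\<exists>y. 0 < y \<and> 0 < W y \<and> 2 * W x \<le> W y \<and> 2 * (x / W x) \<le> y / W y"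
proof -
  obtain Y where "0 < Y" and ratio: "\<And>y. Y \<le> y \<Longrightarrow> W y / y \<le> W x / (2 * x)"
    using W_over_id_small_at_top[OF assms(2), of "W x / (2 * x)"] assms(3,4) by auto
  obtain y1 where "2 * W x < W y1"
    using assms(1) by (meson not_le)
  define y where "y = max y1 Y"
  have "0 < y" "y1 \<le> y" "Y \<le> y"
    using \<open>0 < Y\<close> by (auto simp: y_def)
  have "2 * W x < W y"
    using W_mono[OF \<open>y1 \<le> y\<close>] \<open>2 * W x < W y1\<close> by linarith
  moreover have "2 * (x / W x) \<le> y / W y"
    using ratio[OF \<open>Y \<le> y\<close>] \<open>0 < y\<close> assms(3,4) \<open>2 * W x < W y\<close> by (simp add: field_simps)
  ultimately show ?thesis
    using \<open>0 < y\<close> assms(4) by auto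
qed

lemma ex_lacunary_if_W_unbounded:
  assumes "\<not> (\<exists>A. \<forall>t. W t \<le> A)" "\<And>e. 0 < e \<Longrightarrow> \<exists>T>0. w T < e"
  shows "\<exists>s. lacunary s"
proof -
  obtain x0 where "0 < W x0"
    using assms(1) W_nonneg by (meson not_le le_less_trans)
  then have "0 < x0"
    using W_nonpos by (metis less_irrefl not_less)
  have "\<exists>s. \<forall>n. (0 < s n \<and> 0 < W (s n)) \<and>
      2 * W (s n) \<le> W (s (Suc n)) \<and> 2 * (s n / W (s n)) \<le> s (Suc n) / W (s (Suc n))"
    using \<open>0 < x0\<close> \<open>0 < W x0\<close> lacunary_step_up[OF assms] by (intro dependent_nat_choice) auto
  then show ?thesis
    unfolding lacunary_def by blast
qed

definition lacunary_test :: "(nat \<Rightarrow> real) \<Rightarrow> nat \<Rightarrow> 'a::euclidean_space \<Rightarrow> real" where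
  "lacunary_test s K = radial_step (\<lambda>k. 1 / W (s k)) s K"

lemma borel_measurable_lacunary_test:
  "lacunary s \<Longrightarrow> lacunary_test s K \<in> borel_measurable lebesgue"
  unfolding lacunary_test_def using lacunary_pos
  by (intro borel_measurable_radial_step) (simp add: less_imp_le)

lemma Lambda1_norm_lacunary_test:
  assumes "lacunary s"
  shows "Lambda1_norm w (lacunary_test s K :: 'a::euclidean_space \<Rightarrow> real)
      = ennreal (real K)"
proof -
  have "ennreal (1 / W (s k)) * Wprim w (s k) = 1" for k
    using lacunary_pos[OF assms, of k] by (simp add: Wprim_eq_W ennreal_mult[symmetric])
  then show ?thesis
    using lacunary_pos[OF assms]
    by (simp add: lacunary_test_def Lambda1_norm_radial_step[OF is_weight] less_imp_le
        ennreal_of_nat_eq_real_of_nat)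
qed

lemma max_rearr_lacunary_test:
  assumes "lacunary s" "0 < t"
  shows "max_rearr (lacunary_test s K :: 'a::euclidean_space \<Rightarrow> real) t
    = ennreal ((\<Sum>k<K. min t (s k) / W (s k)) / t)"
  using max_rearr_radial_step[where 'a='a, of "\<lambda>k. 1 / W (s k)" s t K]
    lacunary_pos[OF assms(1)] assms(2)
  by (simp add: lacunary_test_def less_imp_le)

lemma Gamma1inf_norm_lacunary_test_le:
  assumes "lacunary s" "0 < K"
  shows "Gamma1inf_norm w (lacunary_test s K :: 'a::euclidean_space \<Rightarrow> real) \<le> 4"
  unfolding Gamma1inf_norm_def
proof (rule SUP_least)
  fix t :: real
  assume "t \<in> {0<..}"
  then have "0 < t"
    by simp
  obtain j where "j < K" and sum_le: "(\<Sum>k<K. min t (s k) / W (s k)) \<le> 4 * (min t (s j) / W (s j))"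
    using lacunary_sum_le[OF assms(1) \<open>0 < t\<close> assms(2)] by blast
  have "(\<Sum>k<K. min t (s k) / W (s k)) / t * W t \<le> 4 * (min t (s j) / W (s j) * W t) / t"
    using mult_right_mono[OF sum_le W_nonneg] \<open>0 < t\<close> by (simp add: divide_right_mono field_simps)
  also have "\<dots> \<le> 4 * t / t"
    using min_div_W_mult_W_le[OF lacunary_pos[OF assms(1)] \<open>0 < t\<close>] \<open>0 < t\<close>
    by (intro divide_right_mono mult_left_mono) auto
  also have "\<dots> = 4"
    using \<open>0 < t\<close> by simp
  finally have "ennreal ((\<Sum>k<K. min t (s k) / W (s k)) / t * W t) \<le> ennreal 4"
    by (rule ennreal_leI)
  moreover have "0 \<le> (\<Sum>k<K. min t (s k) / W (s k)) / t"
    using lacunary_pos[OF assms(1)] \<open>0 < t\<close>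
    by (intro divide_nonneg_pos sum_nonneg) (auto intro: less_imp_le)
  ultimately have "ennreal ((\<Sum>k<K. min t (s k) / W (s k)) / t) * ennreal (W t) \<le> 4"
    using W_nonneg by (simp add: ennreal_mult[symmetric])
  then show "max_rearr (lacunary_test s K :: 'a \<Rightarrow> real) t * Wprim w t \<le> 4"
    unfolding max_rearr_lacunary_test[OF assms(1) \<open>0 < t\<close>] Wprim_eq_W .
qed

lemma epowr_max_rearr_lacunary_test_le:
  assumes "lacunary s" "0 < t" "0 < K" "0 < q"
  shows "epowr (max_rearr (lacunary_test s K :: 'a::euclidean_space \<Rightarrow> real) t) q
    \<le> (\<Sum>k<K. ennreal ((4 / W (s k)) powr q) * ennreal ((min t (s k) / t) powr q))"
proof -
  have "0 \<le> (\<Sum>k<K. min t (s k) / W (s k))"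
    using lacunary_pos[OF assms(1)] assms(2) by (intro sum_nonneg) (simp add: less_imp_le)
  then have "epowr (max_rearr (lacunary_test s K :: 'a \<Rightarrow> real) t) q
      = ennreal (((\<Sum>k<K. min t (s k) / W (s k)) / t) powr q)"
    unfolding max_rearr_lacunary_test[OF assms(1,2)] using assms(2) by (simp add: epowr_ennreal)
  also have "\<dots> \<le> ennreal (\<Sum>k<K. (4 / W (s k)) powr q * (min t (s k) / t) powr q)"
    using lacunary_sum_powr_le[OF assms] by (rule ennreal_leI)
  also have "\<dots> = (\<Sum>k<K. ennreal ((4 / W (s k)) powr q) * ennreal ((min t (s k) / t) powr q))"
    by (subst sum_ennreal[symmetric]) (auto simp: ennreal_mult)
  finally show ?thesis .
qed

lemma nn_integral_lacunary_test_le: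
  assumes "lacunary s" "0 < K" "0 < q" "is_weight v"
  shows "(\<integral>\<^sup>+ t\<in>{0<..}. epowr (max_rearr (lacunary_test s K :: 'a::euclidean_space \<Rightarrow> real) t) q
      * ennreal (v t) \<partial>lborel)
    \<le> (\<Sum>k<K. ennreal ((4 / W (s k)) powr q) * ball_gamma q v (s k))"
proof -
  define f where "f = (lacunary_test s K :: 'a \<Rightarrow> real)"
  have [measurable]: "(\<lambda>t. ennreal (v t) * indicator {0<..} t) \<in> borel_measurable borel"
    using assms(4) by (intro borel_measurable_weight_indicator) auto
  have "epowr (max_rearr f t) q * ennreal (v t) * indicator {0<..} t
      \<le> (\<Sum>k<K. ennreal ((4 / W (s k)) powr q) *
          (ennreal ((min t (s k) / t) powr q) * (ennreal (v t) * indicator {0<..} t)))" for t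
  proof (cases "0 < t")
    case True
    have "epowr (max_rearr f t) q * (ennreal (v t) * indicator {0<..} t)
        \<le> (\<Sum>k<K. ennreal ((4 / W (s k)) powr q) * ennreal ((min t (s k) / t) powr q))
          * (ennreal (v t) * indicator {0<..} t)"
      unfolding f_def using epowr_max_rearr_lacunary_test_le[OF assms(1) True assms(2,3)]
      by (rule mult_right_mono) simp
    then show ?thesis
      by (simp only: sum_distrib_right mult.assoc)
  qed simp
  then have "(\<integral>\<^sup>+ t\<in>{0<..}. epowr (max_rearr f t) q * ennreal (v t) \<partial>lborel)
      \<le> (\<integral>\<^sup>+ t. (\<Sum>k<K. ennreal ((4 / W (s k)) powr q) *
          (ennreal ((min t (s k) / t) powr q) * (ennreal (v t) * indicator {0<..} t))) \<partial>lborel)"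
    by (rule nn_integral_mono)
  also have "\<dots> = (\<Sum>k<K. ennreal ((4 / W (s k)) powr q) * ball_gamma q v (s k))"
    unfolding ball_gamma_def by (subst nn_integral_sum) (auto simp: nn_integral_cmult mult.assoc)
  finally show ?thesis
    unfolding f_def .
qed

lemma Gamma_norm_lacunary_test_le:
  assumes "lacunary s" "0 < K" "0 < q" "is_weight v" "0 \<le> C"
    and ball_gamma_le: "\<And>k. ball_gamma q v (s k) \<le> ennreal ((C * W (s k)) powr q)"
  shows "Gamma_norm q v (lacunary_test s K :: 'a::euclidean_space \<Rightarrow> real)
    \<le> ennreal (4 * C * real K powr (1 / q))"
proof -
  have "(4 / W (s k)) powr q * (C * W (s k)) powr q = (4 * C) powr q" for k
    using lacunary_pos[OF assms(1), of k] assms(5) by (simp add: powr_mult[symmetric])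
  then have "(\<Sum>k<K. ennreal ((4 / W (s k)) powr q) * ennreal ((C * W (s k)) powr q))
      = ennreal (real K * (4 * C) powr q)"
    by (simp add: ennreal_mult[symmetric] ennreal_of_nat_eq_real_of_nat)
  moreover have "(\<Sum>k<K. ennreal ((4 / W (s k)) powr q) * ball_gamma q v (s k))
      \<le> (\<Sum>k<K. ennreal ((4 / W (s k)) powr q) * ennreal ((C * W (s k)) powr q))"
    by (intro sum_mono mult_left_mono ball_gamma_le) simp
  ultimately have "Gamma_norm q v (lacunary_test s K :: 'a \<Rightarrow> real)
      \<le> epowr (ennreal (real K * (4 * C) powr q)) (1 / q)"
    unfolding Gamma_norm_def using nn_integral_lacunary_test_le[OF assms(1-4), where 'a='a] assms(3)
    by (intro epowr_mono) auto
  also have "\<dots> = ennreal (4 * C * real K powr (1 / q))"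
    using assms(3,5) by (simp add: epowr_ennreal powr_mult powr_powr)
  finally show ?thesis .
qed

end

section \<open>Necessity\<close>

context finite_decreasing_weight
begin

lemma not_space_eq_Gamma1inf_norm_if_lacunary:
  assumes "lacunary s"
  shows "\<not> space_eq (Lambda1_norm w :: ('a::euclidean_space \<Rightarrow> real) \<Rightarrow> ennreal) (Gamma1inf_norm w)"
proof
  assume "space_eq (Lambda1_norm w :: ('a \<Rightarrow> real) \<Rightarrow> ennreal) (Gamma1inf_norm w)"
  then obtain C where "0 < C" and C: "\<And>f::'a \<Rightarrow> real. f \<in> borel_measurable lebesgue \<Longrightarrow>
      Lambda1_norm w f \<le> ennreal C * Gamma1inf_norm w f"
    unfolding space_eq_def by blast
  define K where "K = nat \<lceil>4 * C\<rceil> + 1"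
  have "0 < K" "4 * C < real K"
    unfolding K_def by linarith+
  have "ennreal (real K) \<le> ennreal C * Gamma1inf_norm w (lacunary_test s K :: 'a \<Rightarrow> real)"
    using C[OF borel_measurable_lacunary_test[OF assms, of K]]
      Lambda1_norm_lacunary_test[OF assms, of K, where 'a='a]
    by simp
  also have "\<dots> \<le> ennreal C * 4"
    using Gamma1inf_norm_lacunary_test_le[OF assms \<open>0 < K\<close>] by (intro mult_left_mono) auto
  also have "\<dots> = ennreal (4 * C)"
    using \<open>0 < C\<close> by (simp add: ennreal_mult mult.commute)
  finally have "real K \<le> 4 * C"
    using \<open>0 < C\<close> by simp
  then show False
    using \<open>4 * C < real K\<close> by simp
qed

lemma not_space_eq_Gamma_norm_if_lacunary:
  assumes "lacunary s" "1 < q" "is_weight v"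
  shows "\<not> space_eq (Lambda1_norm w :: ('a::euclidean_space \<Rightarrow> real) \<Rightarrow> ennreal) (Gamma_norm q v)"
proof
  assume "space_eq (Lambda1_norm w :: ('a \<Rightarrow> real) \<Rightarrow> ennreal) (Gamma_norm q v)"
  then obtain C where "0 < C"
    and Lambda_le: "\<And>f::'a \<Rightarrow> real. f \<in> borel_measurable lebesgue \<Longrightarrow>
        Lambda1_norm w f \<le> ennreal C * Gamma_norm q v f"
    and Gamma_le: "\<And>f::'a \<Rightarrow> real. f \<in> borel_measurable lebesgue \<Longrightarrow>
        Gamma_norm q v f \<le> ennreal C * Lambda1_norm w f"
    unfolding space_eq_def by blast
  obtain K where "0 < K" "4 * C * C * real K powr (1 / q) < real K"
    using ex_nat_mult_powr_less[OF assms(2)] by blast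
  have "ennreal (real K) \<le> ennreal C * Gamma_norm q v (lacunary_test s K :: 'a \<Rightarrow> real)"
    using Lambda_le[OF borel_measurable_lacunary_test[OF assms(1), of K]]
      Lambda1_norm_lacunary_test[OF assms(1), of K, where 'a='a]
    by simp
  also have "\<dots> \<le> ennreal C * ennreal (4 * C * real K powr (1 / q))"
    using \<open>0 < C\<close> assms lacunary_pos[OF assms(1)]
    by (intro mult_left_mono Gamma_norm_lacunary_test_le ball_gamma_le_if_Gamma_norm_le[OF Gamma_le]
        \<open>0 < K\<close>) auto
  also have "\<dots> = ennreal (4 * C * C * real K powr (1 / q))"
    using \<open>0 < C\<close> by (simp add: ennreal_mult[symmetric] mult_ac)
  finally show False
    using \<open>4 * C * C * real K powr (1 / q) < real K\<close> \<open>0 < C\<close> by (simp add: ennreal_le_iff2)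
qed

lemma ball_gamma_scaled_ge_if_w_ge:
  assumes "\<And>f::'a::euclidean_space \<Rightarrow> real. f \<in> borel_measurable lebesgue \<Longrightarrow>
      Lambda1_norm w f \<le> ennreal C * Gamma_norm q v f"
    and "\<And>t. 0 < t \<Longrightarrow> L \<le> w t" "0 < L" "0 < q" "0 < C" "0 < N"
  shows "ennreal ((L / C) powr q) \<le> ennreal ((1 / N) powr q) * ball_gamma q v N"
proof -
  have "L * N \<le> N * w N"
    using assms(2)[OF assms(6)] assms(6) by (simp add: mult.commute)
  also have "\<dots> \<le> W N"
    by (rule mult_w_le_W[OF assms(6)])
  finally have "(L / C) powr q \<le> (1 / N) powr q * (W N / C) powr q"
    using assms(3-6) by (simp add: powr_mult[symmetric] powr_mono2 divide_right_mono field_simps)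
  then have "ennreal ((L / C) powr q) \<le> ennreal ((1 / N) powr q) * ennreal ((W N / C) powr q)"
    by (simp add: ennreal_mult[symmetric] ennreal_leI)
  also have "\<dots> \<le> ennreal ((1 / N) powr q) * ball_gamma q v N"
  proof (rule mult_left_mono)
    show "ennreal ((W N / C) powr q) \<le> ball_gamma q v N"
      by (rule ball_gamma_ge_if_Lambda1_norm_le[where 'a='a]) (use assms(1,4-6) in auto)
  qed simp
  finally show ?thesis .
qed

lemma not_space_eq_Gamma_norm_if_w_ge:
  assumes "0 < L" "\<And>t. 0 < t \<Longrightarrow> L \<le> w t" "0 < q" "is_weight v"
  shows "\<not> space_eq (Lambda1_norm w :: ('a::euclidean_space \<Rightarrow> real) \<Rightarrow> ennreal) (Gamma_norm q v)"
proof
  assume "space_eq (Lambda1_norm w :: ('a \<Rightarrow> real) \<Rightarrow> ennreal) (Gamma_norm q v)"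
  then obtain C where "0 < C"
    and Lambda_le: "\<And>f::'a \<Rightarrow> real. f \<in> borel_measurable lebesgue \<Longrightarrow>
        Lambda1_norm w f \<le> ennreal C * Gamma_norm q v f"
    and Gamma_le: "\<And>f::'a \<Rightarrow> real. f \<in> borel_measurable lebesgue \<Longrightarrow>
        Gamma_norm q v f \<le> ennreal C * Lambda1_norm w f"
    unfolding space_eq_def by blast
  have "ball_gamma q v 1 \<le> ennreal ((C * W 1) powr q)"
    using ball_gamma_le_if_Gamma_norm_le[OF Gamma_le] assms(3) \<open>0 < C\<close> by simp
  then have "ball_gamma q v 1 < \<infinity>"
    using ennreal_less_top le_less_trans by (metis infinity_ennreal_def)
  then have "(\<lambda>n. ennreal ((1 / real (Suc n)) powr q) * ball_gamma q v (real (Suc n))) \<longlonglongrightarrow> 0"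
    by (rule ball_gamma_div_powr_tendsto_0[OF assms(4,3)])
  moreover have
    "ennreal ((L / C) powr q) \<le> ennreal ((1 / real (Suc n)) powr q) * ball_gamma q v (real (Suc n))"
    for n
    using assms(1-3) \<open>0 < C\<close> by (intro ball_gamma_scaled_ge_if_w_ge[OF Lambda_le]) auto
  ultimately have "ennreal ((L / C) powr q) \<le> 0"
    using LIMSEQ_le_const by blast
  then show False
    using assms(1) \<open>0 < C\<close> by simp
qed

lemma bounded_if_space_eq_Gamma_norm:
  assumes "1 < q" "is_weight v"
    and "space_eq (Lambda1_norm w :: ('a::euclidean_space \<Rightarrow> real) \<Rightarrow> ennreal) (Gamma_norm q v)"
  shows "\<exists>B. \<forall>x>0. w x \<le> B"
  using assms ex_lacunary_if_unbounded not_space_eq_Gamma_norm_if_lacunary by blast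

lemma bounded_if_space_eq_Gamma1inf_norm:
  assumes "space_eq (Lambda1_norm w :: ('a::euclidean_space \<Rightarrow> real) \<Rightarrow> ennreal) (Gamma1inf_norm w)"
  shows "\<exists>B. \<forall>x>0. w x \<le> B"
  using assms ex_lacunary_if_unbounded not_space_eq_Gamma1inf_norm_if_lacunary by blast

lemma set_integrable_if_space_eq_Gamma_norm:
  assumes "1 < q" "is_weight v"
    and "space_eq (Lambda1_norm w :: ('a::euclidean_space \<Rightarrow> real) \<Rightarrow> ennreal) (Gamma_norm q v)"
  shows "set_integrable lborel {0<..} w"
proof (rule ccontr)
  assume "\<not> set_integrable lborel {0<..} w"
  then have W_unbounded: "\<not> (\<exists>A. \<forall>t. W t \<le> A)"
    using set_integrable_iff_W_bounded by blast
  show False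
  proof (cases "\<forall>e>0. \<exists>T>0. w T < e")
    case True
    then show False
      using ex_lacunary_if_W_unbounded[OF W_unbounded] not_space_eq_Gamma_norm_if_lacunary assms
      by blast
  next
    case False
    then obtain L where "0 < L" "\<And>t. 0 < t \<Longrightarrow> L \<le> w t"
      by (meson not_le)
    then show False
      using not_space_eq_Gamma_norm_if_w_ge[where 'a='a] assms by simp
  qed
qed

end

theorem proposition3p3:
  fixes w :: "real \<Rightarrow> real"
    and dummy :: "'a::euclidean_space itself"
  assumes "decreasing_weight w"
    and "\<forall>t>0. Wprim w t < \<infinity>"
  shows "((\<exists>q v. 1 < q \<and> is_weight v \<and>
             space_eq (Lambda1_norm w :: ('a \<Rightarrow> real) \<Rightarrow> ennreal) (Gamma_norm q v))
        \<longleftrightarrow>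
         (\<forall>q::real. 1 < q \<longrightarrow> (\<exists>wq. is_weight wq \<and>
             equiv_on_pos (\<lambda>r. epowr (Wprim w r) q)
               (\<lambda>r. (\<integral>\<^sup>+ x\<in>{0<..<r}. ennreal (wq x) \<partial>lborel)
                    + ennreal (r powr q) * (\<integral>\<^sup>+ x\<in>{r<..}. ennreal (wq x * x powr (-q)) \<partial>lborel)) \<and>
             space_eq (Lambda1_norm w :: ('a \<Rightarrow> real) \<Rightarrow> ennreal) (Gamma_norm q wq))))
      \<and>
        ((\<exists>q v. 1 < q \<and> is_weight v \<and>
             space_eq (Lambda1_norm w :: ('a \<Rightarrow> real) \<Rightarrow> ennreal) (Gamma_norm q v))
        \<longleftrightarrow>
         (space_eq (Lambda1_norm w :: ('a \<Rightarrow> real) \<Rightarrow> ennreal) (Gamma1inf_norm w) \<and>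
          (w \<longlongrightarrow> 0) at_top \<and> set_integrable lborel {0<..} w))"
proof -
  interpret finite_decreasing_weight w
    using assms by unfold_locales auto
  let ?bounded = "\<exists>B. \<forall>x>0. w x \<le> B" and ?integrable = "set_integrable lborel {0<..} w"
  let "(?I \<longleftrightarrow> ?II) \<and> (_ \<longleftrightarrow> ?III)" = ?thesis
  have I_imp: "?I \<Longrightarrow> ?bounded \<and> ?integrable"
    using bounded_if_space_eq_Gamma_norm[where 'a='a]
      set_integrable_if_space_eq_Gamma_norm[where 'a='a]
    by blast
  have imp_II: "?bounded \<and> ?integrable \<Longrightarrow> ?II"
    using Gamma_representation_if_bounded_integrable[where 'a='a] by simp
  have II_imp: "?II \<Longrightarrow> ?I"
    by (drule spec[of _ 2]) (auto intro!: exI[of _ "2::real"])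
  have imp_III: "?bounded \<and> ?integrable \<Longrightarrow> ?III"
    using space_eq_Gamma1inf_norm_if_bounded_integrable[where 'a='a] tendsto_0_if_set_integrable
    by blast
  have III_imp: "?III \<Longrightarrow> ?bounded \<and> ?integrable"
    using bounded_if_space_eq_Gamma1inf_norm[where 'a='a] by blast
  show ?thesis
    using I_imp imp_II II_imp imp_III III_imp by blast
qed

end
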